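(* Let $\mathcal{F}$ be a fundamental polygon for a discrete subgroup $\Gamma\leq\mathrm{PSL}_2(\mathbb{R})$ of finite covolume, and let $I,J\subset\partial\mathcal{F}$ be non-empty, connected, open subsegments of the boundary which are not both contained in a single edge of $\mathcal{F}$. Then $\mu_G(\mathcal{G}(I,J))>0$.
   Context: $G=\mathrm{PSL}_2(\mathbb{R})$, $p:G\to\mathbb{H}$, $g\mapsto g\cdot i$, $\mu_G$ Haar measure on $G$, $a_t=\mathrm{diag}(e^{t/2},e^{-t/2})$. $\mathcal{G}(I,J)=\{g\in G:\exists\,\ell_1,\ell_2>0\text{ with }p(ga_{-\ell_1})\in I,\ p(ga_{\ell_2})\in J\}$. A fundamental polygon is an open convex $\mathcal{F}\subset\mathbb{H}$ whose closure is a convex hyperbolic polygon with finitely many geodesic sides, every point of $\mathbb{H}$ $\Gamma$-equivalent to a point of $\overline{\mathcal{F}}$, distinct $\Gamma$-equivalent points of $\overline{\mathcal{F}}$ lying on $\partial\mathcal{F}$. The edges of $\mathcal{F}$ are the maximal geodesic segments constituting $\partial\mathcal{F}$. *)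

theory Defs
  imports "HOL-Analysis.Analysis"
begin

section \<open>The group G = PSL_2(R), modelled by SL_2(R) matrices up to sign\<close>

definition SL2 :: "(real^2^2) set" where
  "SL2 = {A. det A = 1}"

definition mat2 :: "real \<Rightarrow> real \<Rightarrow> real \<Rightarrow> real \<Rightarrow> real^2^2" where
  "mat2 a b c d = vector [vector [a, b], vector [c, d]]"

definition mob :: "real^2^2 \<Rightarrow> complex \<Rightarrow> complex" where
  "mob A z = (complex_of_real (A$1$1) * z + complex_of_real (A$1$2)) /
             (complex_of_real (A$2$1) * z + complex_of_real (A$2$2))"

definition hplane :: "complex set" where
  "hplane = {z. Im z > 0}"

definition pmap :: "real^2^2 \<Rightarrow> complex" where
  "pmap g = mob g \<i>"

definition a_t :: "real \<Rightarrow> real^2^2" where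
  "a_t t = mat2 (exp (t/2)) 0 0 (exp (-t/2))"

definition iwasawa :: "real \<Rightarrow> real \<Rightarrow> real \<Rightarrow> real^2^2" where
  "iwasawa x t \<theta> = mat2 1 x 0 1 ** a_t t ** mat2 (cos \<theta>) (- sin \<theta>) (sin \<theta>) (cos \<theta>)"

text \<open>Haar measure on PSL_2(R) of (the set of classes \<plusminus>g of elements g of) S, in Iwasawa
  coordinates: d mu = e^(-t) dx dt d theta, theta in [0, pi).\<close>
definition haar_G :: "(real^2^2) set \<Rightarrow> ennreal" where
  "haar_G S = (\<integral>\<^sup>+ v. ennreal (exp (- fst (snd v))) *
      indicator {v :: real \<times> real \<times> real. snd (snd v) \<in> {0..<pi} \<and>
        (iwasawa (fst v) (fst (snd v)) (snd (snd v)) \<in> S \<or>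
         - iwasawa (fst v) (fst (snd v)) (snd (snd v)) \<in> S)} v \<partial>lborel)"

definition geod_set :: "complex set \<Rightarrow> complex set \<Rightarrow> (real^2^2) set" where
  "geod_set I J = {g \<in> SL2. \<exists>l1 l2. l1 > 0 \<and> l2 > 0 \<and>
       pmap (g ** a_t (- l1)) \<in> I \<and> pmap (g ** a_t l2) \<in> J}"

section \<open>Discrete subgroups (as preimages in SL_2(R)) and finite covolume\<close>

definition discrete_subgroup :: "(real^2^2) set \<Rightarrow> bool" where
  "discrete_subgroup \<Gamma> \<longleftrightarrow> \<Gamma> \<subseteq> SL2 \<and> mat 1 \<in> \<Gamma> \<and> - mat 1 \<in> \<Gamma> \<and>
     (\<forall>g\<in>\<Gamma>. \<forall>h\<in>\<Gamma>. g ** h \<in> \<Gamma>) \<and> (\<forall>g\<in>\<Gamma>. matrix_inv g \<in> \<Gamma>) \<and>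
     (\<forall>g\<in>\<Gamma>. \<exists>e>0. \<forall>h\<in>\<Gamma>. dist h g < e \<longrightarrow> h = g)"

text \<open>Finite covolume: some measurable fundamental domain for the left action of \<Gamma> on G
  (meeting each orbit in exactly one class \<plusminus>g) has finite Haar measure.\<close>
definition finite_covolume :: "(real^2^2) set \<Rightarrow> bool" where
  "finite_covolume \<Gamma> \<longleftrightarrow> (\<exists>D. D \<subseteq> SL2 \<and> D \<in> sets borel \<and>
     (\<forall>g\<in>SL2. \<exists>\<gamma>\<in>\<Gamma>. \<gamma> ** g \<in> D) \<and>
     (\<forall>g\<in>D. \<forall>\<gamma>\<in>\<Gamma>. \<gamma> ** g \<in> D \<longrightarrow> \<gamma> ** g = g \<or> \<gamma> ** g = - g) \<and>
     haar_G D < \<infinity>)"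

definition hdist :: "complex \<Rightarrow> complex \<Rightarrow> real" where
  "hdist z w = arcosh (1 + (cmod (z - w))\<^sup>2 / (2 * Im z * Im w))"

definition hseg :: "complex \<Rightarrow> complex \<Rightarrow> complex set" where
  "hseg z w = {u \<in> hplane. hdist z u + hdist u w = hdist z w}"

definition hconvex :: "complex set \<Rightarrow> bool" where
  "hconvex S \<longleftrightarrow> S \<subseteq> hplane \<and> (\<forall>z\<in>S. \<forall>w\<in>S. hseg z w \<subseteq> S)"

definition geodesic_line :: "complex set \<Rightarrow> bool" where
  "geodesic_line L \<longleftrightarrow> (\<exists>c. L = {z. Im z > 0 \<and> Re z = c}) \<or>
     (\<exists>c r. r > 0 \<and> L = {z. Im z > 0 \<and> cmod (z - complex_of_real c) = r})"

definition geodesic_side :: "complex set \<Rightarrow> bool" where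
  "geodesic_side S \<longleftrightarrow> (\<exists>L. geodesic_line L \<and> S \<subseteq> L) \<and> connected S \<and>
     closedin (top_of_set hplane) S \<and> (\<exists>z w. z \<in> S \<and> w \<in> S \<and> z \<noteq> w)"

definition hbd :: "complex set \<Rightarrow> complex set" where
  "hbd F = frontier F \<inter> hplane"

definition poly_edge :: "complex set \<Rightarrow> complex set \<Rightarrow> bool" where
  "poly_edge F E \<longleftrightarrow> geodesic_side E \<and> E \<subseteq> hbd F \<and>
     (\<forall>E'. geodesic_side E' \<and> E \<subseteq> E' \<and> E' \<subseteq> hbd F \<longrightarrow> E' = E)"

definition fundamental_polygon :: "(real^2^2) set \<Rightarrow> complex set \<Rightarrow> bool" where
  "fundamental_polygon \<Gamma> F \<longleftrightarrow>
     open F \<and> F \<subseteq> hplane \<and> hconvex F \<and> hconvex (closure F \<inter> hplane) \<and>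
     (\<exists>Ss. finite Ss \<and> (\<forall>S\<in>Ss. geodesic_side S) \<and> \<Union>Ss = hbd F) \<and>
     (\<forall>z\<in>hplane. \<exists>\<gamma>\<in>\<Gamma>. mob \<gamma> z \<in> closure F) \<and>
     (\<forall>z\<in>closure F \<inter> hplane. \<forall>w\<in>closure F \<inter> hplane.
        z \<noteq> w \<and> (\<exists>\<gamma>\<in>\<Gamma>. mob \<gamma> z = w) \<longrightarrow> z \<in> hbd F \<and> w \<in> hbd F)"

end

theory Submission
  imports Defs
begin

text \<open>Each of \<open>I\<close>, \<open>J\<close> contains an open arc of a geodesic line. If the two arcs can be taken on
  different lines, pick a point on each arc off the other line and move the geodesic through these
  two points slightly: it still crosses both arcs, because a transversal crossing persists under
  perturbation, so \<open>\<G>(I,J)\<close> contains a neighbourhood in Iwasawa coordinates and has positive Haar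
  measure. Otherwise \<open>I\<close> and \<open>J\<close> lie on a single geodesic line \<open>L\<close>. Since \<open>L\<close> contains an arc of
  \<open>\<partial>F\<close>, convexity forces \<open>L \<inter> F = {}\<close>; convexity of \<open>closure F\<close> then puts the geodesic segment
  from \<open>I\<close> to \<open>J\<close> into \<open>L \<inter> \<partial>F\<close>, so \<open>I\<close> and \<open>J\<close> lie in one component of \<open>L \<inter> \<partial>F\<close>, which is an edge.\<close>

section \<open>Moebius transformations and the hyperbolic distance\<close>

lemma matrix_mult_2_nth:
  fixes A B :: "real^2^2"
  shows "(A ** B)$1$1 = A$1$1 * B$1$1 + A$1$2 * B$2$1"
    "(A ** B)$1$2 = A$1$1 * B$1$2 + A$1$2 * B$2$2"
    "(A ** B)$2$1 = A$2$1 * B$1$1 + A$2$2 * B$2$1"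
    "(A ** B)$2$2 = A$2$1 * B$1$2 + A$2$2 * B$2$2"
  by (simp_all add: matrix_matrix_mult_def sum_2)

lemma mat2_nth [simp]:
  "mat2 a b c d $1$1 = a" "mat2 a b c d $1$2 = b" "mat2 a b c d $2$1 = c" "mat2 a b c d $2$2 = d"
  by (simp_all add: mat2_def)

lemma mat2_eqI:
  fixes A B :: "real^2^2"
  assumes "A$1$1 = B$1$1" "A$1$2 = B$1$2" "A$2$1 = B$2$1" "A$2$2 = B$2$2"
  shows "A = B"
  using assms by (simp add: vec_eq_iff forall_2)

lemma matrix_mult_uminus_left:
  fixes A B :: "real^2^2"
  shows "(- A) ** B = - (A ** B)"
  by (rule mat2_eqI) (simp_all add: matrix_mult_2_nth)

lemma cmod_of_real_affine_sq:
  "(cmod (complex_of_real c * z + complex_of_real d))\<^sup>2 = (c * Re z + d)\<^sup>2 + (c * Im z)\<^sup>2"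
  by (simp add: cmod_power2)

lemma mob_denom_nonzero:
  fixes g :: "real^2^2"
  assumes "det g = 1" "Im z > 0"
  shows "complex_of_real (g$2$1) * z + complex_of_real (g$2$2) \<noteq> 0"
proof
  assume "complex_of_real (g$2$1) * z + complex_of_real (g$2$2) = 0"
  then have "(g$2$1 * Re z + g$2$2)\<^sup>2 + (g$2$1 * Im z)\<^sup>2 = 0"
    by (metis cmod_of_real_affine_sq norm_zero power_zero_numeral)
  then have "g$2$1 * Im z = 0" "g$2$1 * Re z + g$2$2 = 0"
    by (simp_all add: sum_power2_eq_zero_iff)
  with assms show False by (auto simp: det_2)
qed

lemma Im_mob:
  fixes g :: "real^2^2"
  assumes "det g = 1"
  shows "Im (mob g z) = Im z / (cmod (complex_of_real (g$2$1) * z + complex_of_real (g$2$2)))\<^sup>2"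
  using assms unfolding cmod_of_real_affine_sq
  by (simp add: mob_def Im_divide det_2 algebra_simps power2_eq_square)

lemma Im_mob_pos:
  fixes g :: "real^2^2"
  assumes "det g = 1" "Im z > 0"
  shows "Im (mob g z) > 0"
  using Im_mob[OF assms(1), of z] mob_denom_nonzero[OF assms] assms by simp

lemma mob_uminus: "mob (- g) z = mob g z"
proof -
  have "(- a - b) / (- c - d) = (a + b) / (c + d)" for a b c d :: complex
    using minus_divide_divide[of "a + b" "c + d"] by simp
  then show ?thesis by (simp add: mob_def)
qed

lemma mob_mult:
  fixes A B :: "real^2^2"
  assumes "det B = 1" "Im z > 0"
  shows "mob (A ** B) z = mob A (mob B z)"
proof -
  define v where "v = complex_of_real (B$1$1) * z + complex_of_real (B$1$2)"
  define w where "w = complex_of_real (B$2$1) * z + complex_of_real (B$2$2)"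
  have w: "w \<noteq> 0" using mob_denom_nonzero[OF assms] by (simp add: w_def)
  have "complex_of_real (A$1$1) * (v/w) + complex_of_real (A$1$2) =
      (complex_of_real (A$1$1) * v + complex_of_real (A$1$2) * w) / w"
    "complex_of_real (A$2$1) * (v/w) + complex_of_real (A$2$2) =
      (complex_of_real (A$2$1) * v + complex_of_real (A$2$2) * w) / w"
    using w by (simp_all add: field_simps)
  then have "mob A (mob B z) =
      (complex_of_real (A$1$1) * v + complex_of_real (A$1$2) * w) /
      (complex_of_real (A$2$1) * v + complex_of_real (A$2$2) * w)"
    using w by (simp add: mob_def v_def[symmetric] w_def[symmetric])
  also have "\<dots> = mob (A ** B) z"
    by (simp add: mob_def matrix_mult_2_nth v_def w_def algebra_simps)
  finally show ?thesis by simp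
qed

lemma mob_diff:
  fixes g :: "real^2^2"
  assumes "det g = 1" "Im z > 0" "Im w > 0"
  shows "mob g z - mob g w = (z - w) /
    ((complex_of_real (g$2$1) * z + complex_of_real (g$2$2)) *
     (complex_of_real (g$2$1) * w + complex_of_real (g$2$2)))"
proof -
  define a where "a = complex_of_real (g$1$1)"
  define b where "b = complex_of_real (g$1$2)"
  define c where "c = complex_of_real (g$2$1)"
  define d where "d = complex_of_real (g$2$2)"
  have det: "a * d - b * c = 1"
    using assms(1) by (simp add: det_2 a_def b_def c_def d_def flip: of_real_mult of_real_diff)
  have "c * z + d \<noteq> 0" "c * w + d \<noteq> 0"
    using mob_denom_nonzero[OF assms(1,2)] mob_denom_nonzero[OF assms(1,3)] by (simp_all add: c_def d_def)
  then have "(a*z + b)/(c*z + d) - (a*w + b)/(c*w + d) =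
      ((a*z + b) * (c*w + d) - (a*w + b) * (c*z + d)) / ((c*z + d) * (c*w + d))"
    by (simp add: field_simps)
  also have "(a*z + b) * (c*w + d) - (a*w + b) * (c*z + d) = (a*d - b*c) * (z - w)"
    by (simp add: algebra_simps)
  finally show ?thesis using det by (simp add: mob_def a_def b_def c_def d_def)
qed

lemma mob_a_t: "mob (a_t t) z = complex_of_real (exp t) * z"
proof -
  have "exp t = exp (t/2) / exp (- t/2)" by (simp flip: exp_diff)
  then have "complex_of_real (exp t) = complex_of_real (exp (t/2)) / complex_of_real (exp (- t/2))"
    by simp
  then show ?thesis by (simp add: mob_def a_t_def)
qed

lemma det_a_t: "det (a_t t) = 1"
  by (simp add: a_t_def det_2 flip: exp_add)

lemma pmap_mult_a_t: "pmap (g ** a_t t) = mob g (\<i> * complex_of_real (exp t))"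
  by (simp add: pmap_def mob_mult det_a_t mob_a_t mult.commute)

lemma hdist_commute: "hdist z w = hdist w z"
  by (simp add: hdist_def norm_minus_commute mult.commute mult.left_commute)

lemma hdist_mob:
  fixes g :: "real^2^2"
  assumes "det g = 1" "Im z > 0" "Im w > 0"
  shows "hdist (mob g z) (mob g w) = hdist z w"
proof -
  define N where "N = (\<lambda>z. cmod (complex_of_real (g$2$1) * z + complex_of_real (g$2$2)))"
  have nz: "N z > 0" "N w > 0" using mob_denom_nonzero assms by (auto simp: N_def)
  have e1: "cmod (mob g z - mob g w) = cmod (z - w) / (N z * N w)"
    by (simp add: mob_diff[OF assms] norm_divide norm_mult N_def)
  have e2: "Im (mob g z) = Im z / (N z)\<^sup>2" "Im (mob g w) = Im w / (N w)\<^sup>2"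
    using Im_mob assms by (auto simp: N_def)
  have "(cmod (mob g z - mob g w))\<^sup>2 / (2 * Im (mob g z) * Im (mob g w)) =
      ((cmod (z - w))\<^sup>2 / (N z * N w)\<^sup>2) / (2 * Im z * Im w / (N z * N w)\<^sup>2)"
    unfolding e1 e2 by (simp add: power_divide power_mult_distrib)
  also have "\<dots> = (cmod (z - w))\<^sup>2 / (2 * Im z * Im w)"
    using nz by simp
  finally show ?thesis by (simp add: hdist_def)
qed

lemma hdist_imag_axis:
  assumes "u > 0" "v > 0"
  shows "hdist (\<i> * complex_of_real u) (\<i> * complex_of_real v) = \<bar>ln u - ln v\<bar>"
proof -
  have "cmod (\<i> * complex_of_real u - \<i> * complex_of_real v) = \<bar>u - v\<bar>"
    by (simp add: cmod_def)
  then have "1 + (cmod (\<i> * complex_of_real u - \<i> * complex_of_real v))\<^sup>2 /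
      (2 * Im (\<i> * complex_of_real u) * Im (\<i> * complex_of_real v)) = cosh (ln u - ln v)"
    using assms by (simp add: cosh_def exp_diff power2_eq_square field_simps)
  then have "hdist (\<i> * complex_of_real u) (\<i> * complex_of_real v) = arcosh (cosh \<bar>ln u - ln v\<bar>)"
    by (simp add: hdist_def)
  then show ?thesis by (metis arcosh_cosh_real abs_ge_zero)
qed


section \<open>Iwasawa coordinates and the Haar measure\<close>

lemma iwasawa_nth:
  "iwasawa x t \<theta> $1$1 = exp (t/2) * cos \<theta> + x * exp (-t/2) * sin \<theta>"
  "iwasawa x t \<theta> $1$2 = - exp (t/2) * sin \<theta> + x * exp (-t/2) * cos \<theta>"
  "iwasawa x t \<theta> $2$1 = exp (-t/2) * sin \<theta>"
  "iwasawa x t \<theta> $2$2 = exp (-t/2) * cos \<theta>"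
  by (simp_all add: iwasawa_def a_t_def matrix_mult_2_nth algebra_simps)

lemma det_iwasawa: "det (iwasawa x t \<theta>) = 1"
proof -
  have "det (iwasawa x t \<theta>) = (exp (t/2) * exp (-t/2)) * (cos \<theta> * cos \<theta> + sin \<theta> * sin \<theta>)"
    by (simp only: det_2 iwasawa_nth) algebra
  also have "\<dots> = 1"
    by (simp only: sin_cos_squared_add[unfolded power2_eq_square] flip: exp_add) simp
  finally show ?thesis .
qed

lemma iwasawa_minus_pi: "iwasawa x t (\<theta> - pi) = - iwasawa x t \<theta>"
  by (rule mat2_eqI) (simp_all add: iwasawa_nth sin_diff cos_diff)

lemma continuous_iwasawa_nth:
  "continuous (at v) (\<lambda>v. iwasawa (fst v) (fst (snd v)) (snd (snd v)) $ i $ j)"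
proof -
  have "i = 1 \<or> i = 2" "j = 1 \<or> j = 2" using exhaust_2 by auto
  then show ?thesis by (elim disjE) (simp_all add: iwasawa_nth; intro continuous_intros)+
qed

lemma iwasawa_surj:
  fixes g :: "real^2^2"
  assumes "det g = 1"
  obtains x t \<theta> where "0 \<le> \<theta>" "\<theta> < 2 * pi" "iwasawa x t \<theta> = g"
proof -
  define a b c d where "a = g$1$1" and "b = g$1$2" and "c = g$2$1" and "d = g$2$2"
  have det: "a * d - b * c = 1" using assms by (simp add: det_2 a_def b_def c_def d_def)
  define \<rho> where "\<rho> = sqrt (c\<^sup>2 + d\<^sup>2)"
  have cd_pos: "c\<^sup>2 + d\<^sup>2 > 0"
    using det by (auto simp: sum_power2_gt_zero_iff)
  then have \<rho>: "\<rho> > 0" "\<rho>\<^sup>2 = c\<^sup>2 + d\<^sup>2" by (simp_all add: \<rho>_def)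
  have "(d/\<rho>)\<^sup>2 + (c/\<rho>)\<^sup>2 = (c\<^sup>2 + d\<^sup>2) / \<rho>\<^sup>2"
    by (simp add: power_divide add_divide_distrib add.commute)
  also have "\<dots> = 1"
    using \<rho>(2) cd_pos by (metis divide_self less_irrefl)
  finally have "(d/\<rho>)\<^sup>2 + (c/\<rho>)\<^sup>2 = 1" .
  then obtain \<theta> where \<theta>: "0 \<le> \<theta>" "\<theta> < 2 * pi" "d/\<rho> = cos \<theta>" "c/\<rho> = sin \<theta>"
    by (rule sincos_total_2pi)
  define t where "t = -2 * ln \<rho>"
  define x where "x = (a*c + b*d) / \<rho>\<^sup>2"
  have exp_t: "exp (t/2) = 1/\<rho>" "exp (- (t/2)) = \<rho>"
    using \<rho> by (simp_all add: t_def exp_minus inverse_eq_divide)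
  have cd: "c = \<rho> * sin \<theta>" "d = \<rho> * cos \<theta>"
    using \<theta> \<rho> by (simp_all add: field_simps)
  have "iwasawa x t \<theta> = g"
  proof (rule mat2_eqI)
    show "iwasawa x t \<theta> $2$1 = g$2$1" "iwasawa x t \<theta> $2$2 = g$2$2"
      using cd by (simp_all add: iwasawa_nth exp_t c_def d_def)
    have "d + (a*c + b*d) * c = a * (c\<^sup>2 + d\<^sup>2) + d * (1 - (a*d - b*c))"
      "- c + (a*c + b*d) * d = b * (c\<^sup>2 + d\<^sup>2) + c * ((a*d - b*c) - 1)"
      by (simp_all add: algebra_simps power2_eq_square)
    then have num: "d + (a*c + b*d) * c = a * \<rho>\<^sup>2" "- c + (a*c + b*d) * d = b * \<rho>\<^sup>2"
      by (simp_all add: det \<rho>(2))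
    have "iwasawa x t \<theta> $1$1 = (d + (a*c + b*d) * c) / \<rho>\<^sup>2"
      "iwasawa x t \<theta> $1$2 = (- c + (a*c + b*d) * d) / \<rho>\<^sup>2"
      using \<rho>(1) \<theta> by (simp_all add: iwasawa_nth exp_t x_def field_simps power2_eq_square)
    then show "iwasawa x t \<theta> $1$1 = g$1$1" "iwasawa x t \<theta> $1$2 = g$1$2"
      using \<rho>(1) unfolding num by (simp_all add: a_def b_def)
  qed
  with \<theta> that show ?thesis by blast
qed

lemma iwasawa_surj_up_to_sign:
  fixes g :: "real^2^2"
  assumes "det g = 1"
  obtains x t \<theta> where "0 \<le> \<theta>" "\<theta> < pi" "iwasawa x t \<theta> = g \<or> iwasawa x t \<theta> = - g"
proof -
  obtain x t \<theta> where \<theta>: "0 \<le> \<theta>" "\<theta> < 2 * pi" "iwasawa x t \<theta> = g"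
    using iwasawa_surj[OF assms] .
  show ?thesis
  proof (cases "\<theta> < pi")
    case True
    with \<theta> that show ?thesis by blast
  next
    case False
    with \<theta> iwasawa_minus_pi[of x t \<theta>] that[of "\<theta> - pi" x t] show ?thesis by auto
  qed
qed

lemma haar_G_pos_of_ball:
  assumes "\<epsilon> > 0" "0 \<le> \<theta>\<^sub>0" "\<theta>\<^sub>0 < pi"
    and S: "\<And>v. dist v (x\<^sub>0, t\<^sub>0, \<theta>\<^sub>0) < \<epsilon> \<Longrightarrow> iwasawa (fst v) (fst (snd v)) (snd (snd v)) \<in> S"
  shows "haar_G S > 0"
proof -
  define \<delta> where "\<delta> = min (\<epsilon>/2) (min ((pi - \<theta>\<^sub>0)/2) 1)"
  have \<delta>: "\<delta> > 0" "\<delta> \<le> \<epsilon>/2" "\<delta> \<le> (pi - \<theta>\<^sub>0)/2" "\<delta> \<le> 1"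
    using assms unfolding \<delta>_def by (auto simp: min_def)
  \<comment> \<open>shifted in the \<open>\<theta>\<close>-direction to stay inside the chart \<open>0 \<le> \<theta> < pi\<close> even if \<open>\<theta>\<^sub>0 = 0\<close>\<close>
  define B where "B = ball (x\<^sub>0, t\<^sub>0, \<theta>\<^sub>0 + \<delta>/2) (\<delta>/2)"
  define D where "D = {v :: real \<times> real \<times> real. snd (snd v) \<in> {0..<pi} \<and>
    (iwasawa (fst v) (fst (snd v)) (snd (snd v)) \<in> S \<or> - iwasawa (fst v) (fst (snd v)) (snd (snd v)) \<in> S)}"
  have B_sub: "v \<in> D \<and> exp (- t\<^sub>0 - 1) \<le> exp (- fst (snd v))" if "v \<in> B" for v
  proof -
    obtain x t \<theta> where v: "v = (x, t, \<theta>)" by (cases v) auto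
    have "dist v (x\<^sub>0, t\<^sub>0, \<theta>\<^sub>0 + \<delta>/2) < \<delta>/2" using that by (simp add: B_def dist_commute)
    then have "dist x x\<^sub>0 < \<delta>/2" "dist t t\<^sub>0 < \<delta>/2" "dist \<theta> (\<theta>\<^sub>0 + \<delta>/2) < \<delta>/2"
      unfolding v by (smt (verit) dist_fst_le dist_snd_le fst_conv snd_conv)+
    then have "0 \<le> \<theta> \<and> \<theta> < pi \<and> t \<le> t\<^sub>0 + 1"
      using \<delta> assms(2,3) unfolding dist_real_def abs_less_iff by auto
    moreover have "dist (x\<^sub>0, t\<^sub>0, \<theta>\<^sub>0 + \<delta>/2) (x\<^sub>0, t\<^sub>0, \<theta>\<^sub>0) = \<delta>/2"
      using \<delta> by (simp add: dist_prod_def dist_real_def)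
    then have "dist v (x\<^sub>0, t\<^sub>0, \<theta>\<^sub>0) < \<epsilon>"
      using dist_triangle[of v "(x\<^sub>0, t\<^sub>0, \<theta>\<^sub>0)" "(x\<^sub>0, t\<^sub>0, \<theta>\<^sub>0 + \<delta>/2)"]
        \<open>dist v (x\<^sub>0, t\<^sub>0, \<theta>\<^sub>0 + \<delta>/2) < \<delta>/2\<close> \<delta> by linarith
    ultimately show ?thesis using S[of v] by (simp add: D_def v)
  qed
  have "0 < ennreal (exp (- t\<^sub>0 - 1)) * emeasure lborel B"
    using \<delta> by (simp add: B_def emeasure_ball ennreal_zero_less_mult_iff)
  also have "\<dots> = (\<integral>\<^sup>+ v. ennreal (exp (- t\<^sub>0 - 1)) * indicator B v \<partial>lborel)"
    by (rule nn_integral_cmult_indicator[symmetric]) (simp add: B_def)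
  also have "\<dots> \<le> (\<integral>\<^sup>+ v. ennreal (exp (- fst (snd v))) * indicator D v \<partial>lborel)"
    by (intro nn_integral_mono) (use B_sub in \<open>auto simp: indicator_def\<close>)
  also have "\<dots> = haar_G S"
    by (simp add: haar_G_def D_def)
  finally show ?thesis .
qed

section \<open>Geodesic lines\<close>

definition cline :: "real \<Rightarrow> real \<Rightarrow> real \<Rightarrow> complex \<Rightarrow> real" where
  "cline A B C z = A * (cmod z)\<^sup>2 + B * Re z + C"

text \<open>Pulled back along \<open>u \<mapsto> g (i u)\<close>, the equation \<open>cline A B C = 0\<close> becomes the quadratic
  equation \<open>cline_coeff2 A B C g * u\<^sup>2 + cline_coeff0 A B C g = 0\<close>.\<close>
definition cline_coeff2 :: "real \<Rightarrow> real \<Rightarrow> real \<Rightarrow> real^2^2 \<Rightarrow> real" where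
  "cline_coeff2 A B C g = A * (g$1$1)\<^sup>2 + B * g$1$1 * g$2$1 + C * (g$2$1)\<^sup>2"

definition cline_coeff0 :: "real \<Rightarrow> real \<Rightarrow> real \<Rightarrow> real^2^2 \<Rightarrow> real" where
  "cline_coeff0 A B C g = A * (g$1$2)\<^sup>2 + B * g$1$2 * g$2$2 + C * (g$2$2)\<^sup>2"

lemma cline_mob_imag_axis:
  fixes g :: "real^2^2"
  assumes "det g = 1" "u > 0"
  shows "cline A B C (mob g (\<i> * complex_of_real u)) * ((g$2$1 * u)\<^sup>2 + (g$2$2)\<^sup>2) =
    cline_coeff2 A B C g * u\<^sup>2 + cline_coeff0 A B C g"
proof -
  define Q where "Q = (g$2$1 * u)\<^sup>2 + (g$2$2)\<^sup>2"
  have "Q > 0"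
    using assms by (auto simp: Q_def det_2 sum_power2_gt_zero_iff)
  moreover have "(cmod (mob g (\<i> * complex_of_real u)))\<^sup>2 =
      (cmod (complex_of_real (g$1$1) * (\<i> * complex_of_real u) + complex_of_real (g$1$2)))\<^sup>2 /
      (cmod (complex_of_real (g$2$1) * (\<i> * complex_of_real u) + complex_of_real (g$2$2)))\<^sup>2"
    by (simp only: mob_def norm_divide power_divide)
  then have "(cmod (mob g (\<i> * complex_of_real u)))\<^sup>2 = ((g$1$1 * u)\<^sup>2 + (g$1$2)\<^sup>2) / Q"
    unfolding cmod_of_real_affine_sq Q_def by (simp add: add.commute)
  moreover have "Re (mob g (\<i> * complex_of_real u)) = (g$1$1 * g$2$1 * u\<^sup>2 + g$1$2 * g$2$2) / Q"
    by (simp add: mob_def Re_divide Q_def power2_eq_square algebra_simps)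
  ultimately show ?thesis
    unfolding Q_def[symmetric] cline_def cline_coeff2_def cline_coeff0_def
    by (simp add: field_simps power2_eq_square) (simp add: Q_def algebra_simps power2_eq_square)
qed

lemma cline_mob_imag_axis_eq_0_iff:
  fixes g :: "real^2^2"
  assumes "det g = 1" "u > 0"
  shows "cline A B C (mob g (\<i> * complex_of_real u)) = 0 \<longleftrightarrow>
    cline_coeff2 A B C g * u\<^sup>2 + cline_coeff0 A B C g = 0"
proof -
  have "(g$2$1 * u)\<^sup>2 + (g$2$2)\<^sup>2 > 0"
    using assms by (auto simp: det_2 sum_power2_gt_zero_iff)
  then show ?thesis
    using cline_mob_imag_axis[OF assms, of A B C] by auto
qed

lemma cmod_eq_radius_iff:
  assumes "r > 0"
  shows "cmod (z - complex_of_real c) = r \<longleftrightarrow> (Re z - c)\<^sup>2 + (Im z)\<^sup>2 = r\<^sup>2"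
proof -
  have "cmod (z - complex_of_real c) = r \<longleftrightarrow> (cmod (z - complex_of_real c))\<^sup>2 = r\<^sup>2"
    using assms by (metis abs_of_pos norm_ge_zero power2_eq_iff_nonneg order_less_imp_le)
  then show ?thesis by (simp add: cmod_power2)
qed

lemma geodesic_line_cline:
  assumes "geodesic_line L"
  obtains A B C where "L = {z. Im z > 0 \<and> cline A B C z = 0}"
  using assms unfolding geodesic_line_def
proof (elim disjE exE conjE)
  fix c assume "L = {z. 0 < Im z \<and> Re z = c}"
  then show thesis by (intro that[of 0 1 "-c"]) (auto simp: cline_def)
next
  fix c r assume L: "L = {z. 0 < Im z \<and> cmod (z - complex_of_real c) = r}" "r > 0"
  have "cmod (z - complex_of_real c) = r \<longleftrightarrow> cline 1 (-2*c) (c\<^sup>2 - r\<^sup>2) z = 0" for z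
    unfolding cmod_eq_radius_iff[OF L(2)] cline_def cmod_power2
    by (simp add: power2_eq_square algebra_simps)
  then show thesis using L by (intro that[of 1 "-2*c" "c\<^sup>2 - r\<^sup>2"]) blast
qed

lemma geodesic_line_subset_hplane: "geodesic_line L \<Longrightarrow> L \<subseteq> hplane"
  unfolding geodesic_line_def hplane_def by auto

lemma closedin_geodesic_line:
  assumes "geodesic_line L"
  shows "closedin (top_of_set hplane) L"
proof -
  obtain A B C where L: "L = {z. Im z > 0 \<and> cline A B C z = 0}"
    using geodesic_line_cline[OF assms] .
  have "closed {z. cline A B C z = 0}"
    unfolding cline_def by (intro closed_Collect_eq continuous_intros)
  moreover have "L = hplane \<inter> {z. cline A B C z = 0}" using L by (auto simp: hplane_def)
  ultimately show ?thesis by (simp add: closedin_closed_Int)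
qed

lemma semicircle_points_Re_neq:
  assumes "Im a > 0" "Im b > 0" "a \<noteq> b"
    and "(Re a - c)\<^sup>2 + (Im a)\<^sup>2 = r\<^sup>2" "(Re b - c)\<^sup>2 + (Im b)\<^sup>2 = r\<^sup>2"
  shows "Re a \<noteq> Re b"
proof
  assume "Re a = Re b"
  then have "(Im a)\<^sup>2 = (Im b)\<^sup>2" using assms(4,5) by simp
  then have "Im a = Im b" using assms(1,2) by (simp add: power2_eq_iff_nonneg)
  with \<open>Re a = Re b\<close> assms(3) show False by (simp add: complex_eq_iff)
qed

lemma semicircle_through_two_points_unique:
  assumes "Im a > 0" "Im b > 0" "a \<noteq> b" "r1 > 0" "r2 > 0"
    and e1: "(Re a - c1)\<^sup>2 + (Im a)\<^sup>2 = r1\<^sup>2" "(Re b - c1)\<^sup>2 + (Im b)\<^sup>2 = r1\<^sup>2"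
    and e2: "(Re a - c2)\<^sup>2 + (Im a)\<^sup>2 = r2\<^sup>2" "(Re b - c2)\<^sup>2 + (Im b)\<^sup>2 = r2\<^sup>2"
  shows "c1 = c2" "r1 = r2"
proof -
  have "(Re a - Re b) * (Re a + Re b - 2*c1) = (Im b)\<^sup>2 - (Im a)\<^sup>2"
    "(Re a - Re b) * (Re a + Re b - 2*c2) = (Im b)\<^sup>2 - (Im a)\<^sup>2"
    using e1 e2 by (simp_all add: power2_eq_square algebra_simps)
  then have "(Re a - Re b) * (Re a + Re b - 2*c1) = (Re a - Re b) * (Re a + Re b - 2*c2)"
    by simp
  then show "c1 = c2" using semicircle_points_Re_neq[OF assms(1-3) e1] by simp
  then have "r1\<^sup>2 = r2\<^sup>2" using e1 e2 by simp
  then show "r1 = r2" using assms(4,5) by (simp add: power2_eq_iff_nonneg)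
qed

lemma geodesic_line_eqI:
  assumes "geodesic_line L1" "geodesic_line L2" "a \<in> L1" "a \<in> L2" "b \<in> L1" "b \<in> L2" "a \<noteq> b"
  shows "L1 = L2"
proof -
  have pos: "Im a > 0" "Im b > 0"
    using assms geodesic_line_subset_hplane by (auto simp: hplane_def)
  have circle: "(Re a - c)\<^sup>2 + (Im a)\<^sup>2 = r\<^sup>2" "(Re b - c)\<^sup>2 + (Im b)\<^sup>2 = r\<^sup>2"
    if "L = {z. 0 < Im z \<and> cmod (z - complex_of_real c) = r}" "r > 0" "a \<in> L" "b \<in> L" for L c r
    using that cmod_eq_radius_iff[OF that(2)] by auto
  from assms(1,2) show ?thesis unfolding geodesic_line_def
  proof (elim disjE exE conjE)
    fix c1 c2 assume "L1 = {z. 0 < Im z \<and> Re z = c1}" "L2 = {z. 0 < Im z \<and> Re z = c2}"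
    then show ?thesis using assms(3,4) by auto
  next
    fix c1 c2 r2
    assume L: "L1 = {z. 0 < Im z \<and> Re z = c1}" "L2 = {z. 0 < Im z \<and> cmod (z - complex_of_real c2) = r2}" "r2 > 0"
    have "Re a = Re b" using L(1) assms(3,5) by simp
    with semicircle_points_Re_neq[OF pos assms(7) circle[OF L(2,3) assms(4,6)]] show ?thesis by simp
  next
    fix c1 r1 c2
    assume L: "L1 = {z. 0 < Im z \<and> cmod (z - complex_of_real c1) = r1}" "r1 > 0" "L2 = {z. 0 < Im z \<and> Re z = c2}"
    have "Re a = Re b" using L(3) assms(4,6) by simp
    with semicircle_points_Re_neq[OF pos assms(7) circle[OF L(1,2) assms(3,5)]] show ?thesis by simp
  next
    fix c1 r1 c2 r2
    assume L: "L1 = {z. 0 < Im z \<and> cmod (z - complex_of_real c1) = r1}" "r1 > 0"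
      "L2 = {z. 0 < Im z \<and> cmod (z - complex_of_real c2) = r2}" "r2 > 0"
    then have "c1 = c2" "r1 = r2"
      using semicircle_through_two_points_unique[OF pos assms(7) L(2,4)
          circle[OF L(1,2) assms(3,5)] circle[OF L(3,4) assms(4,6)]] by auto
    then show ?thesis using L by simp
  qed
qed

lemma tanh_artanh_real:
  fixes t :: real
  assumes "-1 < t" "t < 1"
  shows "tanh (artanh t) = t"
proof -
  have "exp (- 2 * artanh t) = (1 - t) / (1 + t)"
    using assms by (simp add: artanh_def exp_minus)
  then have "tanh (artanh t) = (1 - (1 - t) / (1 + t)) / (1 + (1 - t) / (1 + t))"
    by (simp only: tanh_real_altdef)
  also have "\<dots> = t" using assms by (simp add: field_simps)
  finally show ?thesis .
qed

lemma tanh_sq_add_inverse_cosh_sq: "(tanh s)\<^sup>2 + (1 / cosh s)\<^sup>2 = (1::real)"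
proof -
  have "cosh s \<noteq> 0" using cosh_real_pos[of s] by linarith
  moreover have "(sinh s)\<^sup>2 + 1 \<noteq> 0" by (metis add_nonneg_pos zero_le_power2 zero_less_one less_irrefl)
  ultimately show ?thesis
    using cosh_square_eq[of s] by (simp add: tanh_def power_divide add_divide_distrib[symmetric])
qed

lemma vertical_geodesic_homeomorphism:
  "homeomorphism UNIV {z. 0 < Im z \<and> Re z = c}
    (\<lambda>s. complex_of_real c + \<i> * complex_of_real (exp s)) (\<lambda>z. ln (Im z))"
  by (intro homeomorphismI continuous_intros) (auto simp: complex_eq_iff)

lemma semicircle_geodesic_homeomorphism:
  assumes r: "r > 0"
  shows "homeomorphism UNIV {z. 0 < Im z \<and> cmod (z - complex_of_real c) = r}
    (\<lambda>s. complex_of_real (c + r * tanh s) + \<i> * complex_of_real (r / cosh s))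
    (\<lambda>z. artanh ((Re z - c) / r))"
    (is "homeomorphism UNIV ?L ?h ?\<phi>")
proof (rule homeomorphismI)
  have mem: "z \<in> ?L \<longleftrightarrow> Im z > 0 \<and> (Re z - c)\<^sup>2 + (Im z)\<^sup>2 = r\<^sup>2" for z
    using cmod_eq_radius_iff[OF r] by auto
  have inL: "(Re z - c) / r \<in> {-1<..<1}" if "z \<in> ?L" for z
  proof -
    have "(Re z - c)\<^sup>2 < r\<^sup>2" using mem[of z] that
      by (smt (verit) zero_less_power2)
    then have "\<bar>Re z - c\<bar> < r" using r by (metis abs_of_pos power2_abs power_less_imp_less_base abs_ge_zero)
    then show ?thesis using r by (auto simp: abs_less_iff field_simps)
  qed
  have hL: "?h s \<in> ?L" for s
  proof -
    have "(r * tanh s)\<^sup>2 + (r / cosh s)\<^sup>2 = r\<^sup>2 * ((tanh s)\<^sup>2 + (1 / cosh s)\<^sup>2)"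
      by (simp add: power_mult_distrib power_divide algebra_simps)
    then show ?thesis
      unfolding mem using r tanh_sq_add_inverse_cosh_sq[of s] by simp
  qed
  then show "?h ` UNIV \<subseteq> ?L" by blast
  show "continuous_on UNIV ?h" unfolding tanh_def by (intro continuous_intros) auto
  have "continuous_on ?L (\<lambda>z. (Re z - c) / r)" using r by (intro continuous_intros) auto
  then show "continuous_on ?L ?\<phi>"
    using inL by (intro continuous_on_compose2[OF continuous_on_artanh[OF order.refl]]) auto
  show "?\<phi> (?h s) = s" for s using r by (simp add: artanh_tanh_real)
  show "?\<phi> ` ?L \<subseteq> UNIV" by simp
  show "?h (?\<phi> z) = z" if z: "z \<in> ?L" for z
  proof -
    have re: "Re (?h (?\<phi> z)) = Re z"
      using inL[OF z] r by (simp add: tanh_artanh_real)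
    then have "(Im (?h (?\<phi> z)))\<^sup>2 = (Im z)\<^sup>2"
      using mem[of "?h (?\<phi> z)"] mem[of z] hL z by (metis add_left_cancel)
    moreover have "Im (?h (?\<phi> z)) \<ge> 0" "Im z \<ge> 0" using mem[of z] mem[of "?h (?\<phi> z)"] z hL by auto
    ultimately have "Im (?h (?\<phi> z)) = Im z" using power2_eq_iff_nonneg by blast
    then show ?thesis using re complex_eqI by blast
  qed
qed

lemma geodesic_line_homeomorphic_real:
  assumes "geodesic_line L"
  shows "(UNIV :: real set) homeomorphic L"
  using assms unfolding geodesic_line_def
proof (elim disjE exE conjE)
  fix c assume "L = {z. 0 < Im z \<and> Re z = c}"
  then show ?thesis
    using vertical_geodesic_homeomorphism[of c] unfolding homeomorphic_def by blast
next
  fix c r assume "L = {z. 0 < Im z \<and> cmod (z - complex_of_real c) = r}" "r > 0"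
  then show ?thesis
    using semicircle_geodesic_homeomorphism[of r c] unfolding homeomorphic_def by blast
qed

lemma geodesic_line_point_near:
  assumes "geodesic_line L" "w \<in> L" "r > 0"
  obtains z where "z \<in> L \<inter> ball w r" "z \<noteq> w"
proof -
  obtain h :: "real \<Rightarrow> complex" and \<phi> where h: "homeomorphism UNIV L h \<phi>"
    using geodesic_line_homeomorphic_real[OF assms(1)] by (auto simp: homeomorphic_def)
  have "isCont h (\<phi> w)"
    using homeomorphism_cont1[OF h] by (simp add: continuous_on_eq_continuous_at)
  then obtain \<delta> where \<delta>: "\<delta> > 0" "\<And>s. dist s (\<phi> w) < \<delta> \<Longrightarrow> dist (h s) (h (\<phi> w)) < r"
    using assms(3) unfolding continuous_at_eps_delta by blast
  define z where "z = h (\<phi> w + \<delta>/2)"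
  have hw: "h (\<phi> w) = w" using homeomorphism_apply2[OF h assms(2)] .
  have "z \<in> L" using homeomorphism_image1[OF h] by (auto simp: z_def)
  moreover have "dist z w < r" using \<delta>(2)[of "\<phi> w + \<delta>/2"] \<delta>(1) hw by (simp add: z_def dist_real_def)
  moreover have "z \<noteq> w"
  proof
    assume "z = w"
    then have "\<phi> w + \<delta>/2 = \<phi> w" using homeomorphism_apply1[OF h] by (metis UNIV_I z_def)
    with \<delta>(1) show False by simp
  qed
  ultimately show ?thesis by (intro that) (auto simp: dist_commute)
qed

lemma geodesic_line_point_near_off:
  assumes "geodesic_line L" "geodesic_line L'" "L \<noteq> L'" "w \<in> L" "r > 0"
  obtains z where "z \<in> L \<inter> ball w r" "z \<notin> L'"
proof (cases "w \<in> L'")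
  case True
  obtain z where "z \<in> L \<inter> ball w r" "z \<noteq> w"
    using geodesic_line_point_near[OF assms(1,4,5)] .
  with True assms geodesic_line_eqI[OF assms(1,2,4) True, of z] show ?thesis
    by (metis IntD1 that)
next
  case False
  with assms show ?thesis by (intro that[of w]) auto
qed

section \<open>The geodesic flow through two points and its perturbations\<close>

text \<open>\<open>g\<close> acts by \<open>w \<mapsto> ((c + r) w + (c - r)) / (w + 1)\<close>, sending \<open>0, i, \<infinity>\<close> to \<open>c - r, c + i r, c + r\<close>.\<close>
lemma mob_imag_axis_onto_circle:
  assumes r: "r > 0" and z: "(Re z - c)\<^sup>2 + (Im z)\<^sup>2 = r\<^sup>2" and y: "Im z > 0"
  defines "s \<equiv> sqrt (2*r)"
  defines "g \<equiv> mat2 ((c+r)/s) ((c-r)/s) (1/s) (1/s)"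
  defines "u \<equiv> Im z / (r - (Re z - c))"
  shows "det g = 1" "u > 0" "mob g (\<i> * complex_of_real u) = z"
proof -
  have s: "s > 0" "s\<^sup>2 = 2*r" using r by (simp_all add: s_def)
  show "det g = 1" using s by (simp add: g_def det_2 field_simps) (simp add: power2_eq_square)
  have p: "\<bar>Re z - c\<bar> < r"
  proof -
    have "(Re z - c)\<^sup>2 < r\<^sup>2" using z y by (simp add: power2_eq_square) (smt (verit) mult_pos_pos)
    then show ?thesis using r by (metis abs_of_pos power2_abs power_less_imp_less_base abs_ge_zero)
  qed
  then have rp: "r - (Re z - c) > 0" by simp
  then show up: "u > 0" using y by (simp add: u_def)
  have key: "complex_of_real (c+r) * (\<i> * complex_of_real u) + complex_of_real (c-r) = z * (\<i> * complex_of_real u + 1)"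
  proof (rule complex_eqI)
    have "(Im z)\<^sup>2 = (r - (Re z - c)) * (r + (Re z - c))" using z by (simp add: algebra_simps power2_eq_square)
    then have "Im z * u = r + (Re z - c)" using rp unfolding u_def by (simp add: field_simps power2_eq_square)
    then show "Re (complex_of_real (c+r) * (\<i> * complex_of_real u) + complex_of_real (c-r)) = Re (z * (\<i> * complex_of_real u + 1))"
      by (simp add: algebra_simps)
    have "(r - (Re z - c)) * u = Im z" using rp unfolding u_def by simp
    then show "Im (complex_of_real (c+r) * (\<i> * complex_of_real u) + complex_of_real (c-r)) = Im (z * (\<i> * complex_of_real u + 1))"
      by (simp add: algebra_simps)
  qed
  have nz: "\<i> * complex_of_real u + 1 \<noteq> 0"
  proof
    assume "\<i> * complex_of_real u + 1 = 0"
    then have "Re (\<i> * complex_of_real u + 1) = 0" by simp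
    then show False by simp
  qed
  have "mob g (\<i> * complex_of_real u) = (complex_of_real (1/s) * (complex_of_real (c+r) * (\<i> * complex_of_real u) + complex_of_real (c-r))) /
     (complex_of_real (1/s) * (\<i> * complex_of_real u + 1))"
  proof -
    have "complex_of_real ((c+r)/s) * (\<i> * complex_of_real u) + complex_of_real ((c-r)/s) =
       complex_of_real (1/s) * (complex_of_real (c+r) * (\<i> * complex_of_real u) + complex_of_real (c-r))"
      by (simp only: of_real_divide of_real_1) (simp add: add_divide_distrib[symmetric] diff_divide_distrib[symmetric] algebra_simps)
    moreover have "complex_of_real (1/s) * (\<i> * complex_of_real u) + complex_of_real (1/s) =
       complex_of_real (1/s) * (\<i> * complex_of_real u + 1)"
      by (simp add: algebra_simps)
    ultimately show ?thesis by (simp only: mob_def g_def mat2_nth)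
  qed
  also have "\<dots> = z" unfolding key using nz s by simp
  finally show "mob g (\<i> * complex_of_real u) = z" .
qed

lemma mob_imag_axis_through:
  assumes "Im z1 > 0" "Im z2 > 0" "z1 \<noteq> z2"
  obtains g u1 u2 where "det g = 1" "u1 > 0" "u2 > 0" "u1 \<noteq> u2"
    "mob g (\<i> * complex_of_real u1) = z1" "mob g (\<i> * complex_of_real u2) = z2"
proof (cases "Re z1 = Re z2")
  case True
  define g where "g = mat2 1 (Re z1) 0 1"
  have m: "mob g (\<i> * complex_of_real u) = complex_of_real (Re z1) + \<i> * complex_of_real u" for u
    by (simp add: mob_def g_def)
  have "Im z1 \<noteq> Im z2" using True assms(3) complex_eqI by blast
  moreover have "mob g (\<i> * complex_of_real (Im z1)) = z1" "mob g (\<i> * complex_of_real (Im z2)) = z2"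
    unfolding m using True by (simp_all add: complex_eq_iff)
  moreover have "det g = 1" by (simp add: g_def det_2)
  ultimately show ?thesis using assms that by blast
next
  case False
  define c where "c = ((Re z2)\<^sup>2 + (Im z2)\<^sup>2 - (Re z1)\<^sup>2 - (Im z1)\<^sup>2) / (2 * (Re z2 - Re z1))"
  define r where "r = sqrt ((Re z1 - c)\<^sup>2 + (Im z1)\<^sup>2)"
  have rp: "r > 0" using assms(1) by (simp add: r_def add_nonneg_pos)
  have e1: "(Re z1 - c)\<^sup>2 + (Im z1)\<^sup>2 = r\<^sup>2" unfolding r_def by (simp add: add_nonneg_nonneg)
  have "c * (2 * (Re z2 - Re z1)) = (Re z2)\<^sup>2 + (Im z2)\<^sup>2 - (Re z1)\<^sup>2 - (Im z1)\<^sup>2"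
    using False by (simp add: c_def)
  then have "(Re z2 - c)\<^sup>2 + (Im z2)\<^sup>2 = (Re z1 - c)\<^sup>2 + (Im z1)\<^sup>2"
    by (simp add: power2_eq_square algebra_simps)
  then have e2: "(Re z2 - c)\<^sup>2 + (Im z2)\<^sup>2 = r\<^sup>2" using e1 by simp
  note A = mob_imag_axis_onto_circle[OF rp e1 assms(1)] and B = mob_imag_axis_onto_circle[OF rp e2 assms(2)]
  have "Im z1 / (r - (Re z1 - c)) \<noteq> Im z2 / (r - (Re z2 - c))"
    using A(3) B(3) assms(3) by metis
  then show ?thesis using A B that by blast
qed

lemma mob_imag_axis_through_ordered:
  assumes "Im z1 > 0" "Im z2 > 0" "z1 \<noteq> z2"
  obtains g u1 u2 where "det g = 1" "0 < u1" "u1 < u2"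
    "mob g (\<i> * complex_of_real u1) = z1" "mob g (\<i> * complex_of_real u2) = z2"
proof -
  obtain g u1 u2 where g: "det g = 1" "u1 > 0" "u2 > 0" "u1 \<noteq> u2"
    "mob g (\<i> * complex_of_real u1) = z1" "mob g (\<i> * complex_of_real u2) = z2"
    using mob_imag_axis_through[OF assms] .
  show ?thesis
  proof (cases "u1 < u2")
    case True
    with g that show ?thesis by blast
  next
    case False
    define w where "w = mat2 0 (-1) 1 0"
    have w: "det w = 1" by (simp add: w_def det_2)
    have "mob w (\<i> * complex_of_real (1/u)) = \<i> * complex_of_real u" if "u > 0" for u
      using that by (simp add: mob_def w_def field_simps)
    then have inv: "mob (g ** w) (\<i> * complex_of_real (1/u)) = mob g (\<i> * complex_of_real u)"
      if "u > 0" for u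
      using that mob_mult[OF w, of "\<i> * complex_of_real (1/u)"] by simp
    show ?thesis
    proof (rule that[of "g ** w" "1/u1" "1/u2"])
      show "det (g ** w) = 1" using g w by (simp add: det_mul)
      show "0 < 1/u1" "1/u1 < 1/u2" using False g by (simp_all add: frac_less2)
      show "mob (g ** w) (\<i> * complex_of_real (1/u1)) = z1" "mob (g ** w) (\<i> * complex_of_real (1/u2)) = z2"
        using inv[OF g(2)] inv[OF g(3)] g(5,6) by simp_all
    qed
  qed
qed

lemma geodesic_flow_through:
  assumes "Im z1 > 0" "Im z2 > 0" "z1 \<noteq> z2"
  obtains g l1 l2 where "det g = 1" "l1 > 0" "l2 > 0"
    "pmap (g ** a_t (- l1)) = z1" "pmap (g ** a_t l2) = z2"
proof -
  obtain g u1 u2 where g: "det g = 1" "0 < u1" "u1 < u2"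
    "mob g (\<i> * complex_of_real u1) = z1" "mob g (\<i> * complex_of_real u2) = z2"
    using mob_imag_axis_through_ordered[OF assms] .
  define \<tau> where "\<tau> = (ln u1 + ln u2) / 2"
  define l where "l = (ln u2 - ln u1) / 2"
  have flow: "pmap ((g ** a_t \<tau>) ** a_t s) = mob g (\<i> * complex_of_real (exp (\<tau> + s)))" for s
    by (simp add: pmap_mult_a_t mob_mult det_a_t mob_a_t exp_add algebra_simps)
  have "l > 0" using g by (simp add: l_def)
  moreover have "\<tau> - l = ln u1" "\<tau> + l = ln u2" by (simp_all add: \<tau>_def l_def field_simps)
  ultimately show ?thesis
    using g flow[of "- l"] flow[of l] that[of "g ** a_t \<tau>" l l] by (simp add: det_mul det_a_t)
qed

lemma eventually_nhds_continuous_in_open: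
  assumes "continuous (at x) f" "open S" "f x \<in> S"
  shows "\<forall>\<^sub>F y in nhds x. f y \<in> S"
proof -
  have "(f \<longlongrightarrow> f x) (nhds x)"
    using assms(1) by (simp add: continuous_at tendsto_at_iff_tendsto_nhds)
  then show ?thesis using assms(2,3) by (rule topological_tendstoD)
qed

lemma pmap_mult_a_t_in_cline_iff:
  fixes g :: "real^2^2"
  assumes "det g = 1"
  shows "pmap (g ** a_t \<tau>) \<in> {z. Im z > 0 \<and> cline A B C z = 0} \<longleftrightarrow>
    cline_coeff2 A B C g * (exp \<tau>)\<^sup>2 + cline_coeff0 A B C g = 0"
  using cline_mob_imag_axis_eq_0_iff[OF assms, of "exp \<tau>" A B C] Im_mob_pos[OF assms]
  by (simp add: pmap_mult_a_t)

lemma exp_quadratic_root: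
  fixes a b :: real
  shows "- b / a > 0 \<Longrightarrow> a * (exp (ln (- b / a) / 2))\<^sup>2 + b = 0"
    and "a * (exp \<tau>)\<^sup>2 + b = 0 \<Longrightarrow> a \<noteq> 0 \<Longrightarrow> - b / a = exp (2 * \<tau>)"
proof -
  show "a * (exp (ln (- b / a) / 2))\<^sup>2 + b = 0" if "- b / a > 0"
  proof -
    have "(exp (ln (- b / a) / 2))\<^sup>2 = - b / a"
      using that by (simp flip: exp_double)
    moreover have "a \<noteq> 0" using that by auto
    ultimately show ?thesis by simp
  qed
  show "- b / a = exp (2 * \<tau>)" if "a * (exp \<tau>)\<^sup>2 + b = 0" "a \<noteq> 0"
    using that by (simp add: field_simps exp_double[symmetric])
qed

lemma continuous_pmap_flow:
  fixes M :: "'a::metric_space \<Rightarrow> real^2^2"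
  assumes "\<And>i j. continuous (at v\<^sub>0) (\<lambda>v. M v $ i $ j)" "\<And>v. det (M v) = 1" "continuous (at v\<^sub>0) \<tau>"
  shows "continuous (at v\<^sub>0) (\<lambda>v. pmap (M v ** a_t (\<tau> v)))"
  unfolding pmap_mult_a_t mob_def
  using mob_denom_nonzero[OF assms(2), of "\<i> * complex_of_real (exp (\<tau> v\<^sub>0))" v\<^sub>0]
  by (intro continuous_intros assms) auto

text \<open>The crossing time is a root of the quadratic equation of \<open>pmap_mult_a_t_in_cline_iff\<close>,
  whose coefficients depend continuously on \<open>v\<close>; the hypothesis on \<open>\<tau>\<^sub>1\<close> rules out the
  degenerate case in which the whole geodesic lies on \<open>L\<close>.\<close>
lemma eventually_crossing_near:
  fixes M :: "'a::metric_space \<Rightarrow> real^2^2"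
  assumes M: "\<And>i j. continuous (at v\<^sub>0) (\<lambda>v. M v $ i $ j)" "\<And>v. det (M v) = 1"
    and L: "geodesic_line L" "pmap (M v\<^sub>0 ** a_t \<tau>\<^sub>0) \<in> L" "pmap (M v\<^sub>0 ** a_t \<tau>\<^sub>1) \<notin> L"
    and "\<eta> > 0" "\<rho> > 0"
  shows "\<forall>\<^sub>F v in nhds v\<^sub>0. \<exists>\<tau>. \<bar>\<tau> - \<tau>\<^sub>0\<bar> < \<eta> \<and>
    pmap (M v ** a_t \<tau>) \<in> L \<inter> ball (pmap (M v\<^sub>0 ** a_t \<tau>\<^sub>0)) \<rho>"
proof -
  obtain A B C where L_eq: "L = {z. Im z > 0 \<and> cline A B C z = 0}"
    using geodesic_line_cline[OF L(1)] .
  define a where "a = (\<lambda>v. cline_coeff2 A B C (M v))"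
  define b where "b = (\<lambda>v. cline_coeff0 A B C (M v))"
  define \<tau> where "\<tau> = (\<lambda>v. ln (- b v / a v) / 2)"
  have in_L: "pmap (M v ** a_t t) \<in> L \<longleftrightarrow> a v * (exp t)\<^sup>2 + b v = 0" for v t
    unfolding L_eq a_def b_def by (rule pmap_mult_a_t_in_cline_iff[OF M(2)])
  have root0: "a v\<^sub>0 * (exp \<tau>\<^sub>0)\<^sup>2 + b v\<^sub>0 = 0" and "a v\<^sub>0 * (exp \<tau>\<^sub>1)\<^sup>2 + b v\<^sub>0 \<noteq> 0"
    using L(2,3) in_L by auto
  then have "a v\<^sub>0 \<noteq> 0" by auto
  then have ratio0: "- b v\<^sub>0 / a v\<^sub>0 = exp (2 * \<tau>\<^sub>0)" by (rule exp_quadratic_root(2)[OF root0])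
  then have \<tau>0: "\<tau> v\<^sub>0 = \<tau>\<^sub>0" and ratio_pos: "- b v\<^sub>0 / a v\<^sub>0 > 0" by (simp_all add: \<tau>_def)
  have cont_ab: "continuous (at v\<^sub>0) a" "continuous (at v\<^sub>0) b"
    unfolding a_def b_def cline_coeff2_def cline_coeff0_def by (intro continuous_intros M(1))+
  have cont_ratio: "continuous (at v\<^sub>0) (\<lambda>v. - b v / a v)"
    using \<open>a v\<^sub>0 \<noteq> 0\<close> by (intro continuous_intros cont_ab)
  have cont_\<tau>: "continuous (at v\<^sub>0) \<tau>"
    unfolding \<tau>_def using ratio_pos \<open>a v\<^sub>0 \<noteq> 0\<close> by (intro continuous_intros cont_ab) auto
  have "\<forall>\<^sub>F v in nhds v\<^sub>0. pmap (M v ** a_t (\<tau> v)) \<in> ball (pmap (M v\<^sub>0 ** a_t \<tau>\<^sub>0)) \<rho>"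
    using \<open>\<rho> > 0\<close> \<tau>0
    by (intro eventually_nhds_continuous_in_open continuous_pmap_flow[OF M cont_\<tau>]) auto
  moreover have "\<forall>\<^sub>F v in nhds v\<^sub>0. \<tau> v \<in> ball \<tau>\<^sub>0 \<eta>"
    using \<open>\<eta> > 0\<close> \<tau>0 by (intro eventually_nhds_continuous_in_open cont_\<tau>) auto
  moreover have "\<forall>\<^sub>F v in nhds v\<^sub>0. - b v / a v \<in> {0<..}"
    using ratio_pos by (intro eventually_nhds_continuous_in_open cont_ratio) auto
  ultimately show ?thesis
  proof (rule eventually_elim2[OF eventually_conj])
    fix v
    assume "pmap (M v ** a_t (\<tau> v)) \<in> ball (pmap (M v\<^sub>0 ** a_t \<tau>\<^sub>0)) \<rho> \<and> \<tau> v \<in> ball \<tau>\<^sub>0 \<eta>"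
      and "- b v / a v \<in> {0<..}"
    moreover have "pmap (M v ** a_t (\<tau> v)) \<in> L"
      using in_L exp_quadratic_root(1) \<open>- b v / a v \<in> {0<..}\<close> by (simp add: \<tau>_def)
    ultimately show "\<exists>\<tau>. \<bar>\<tau> - \<tau>\<^sub>0\<bar> < \<eta> \<and> pmap (M v ** a_t \<tau>) \<in> L \<inter> ball (pmap (M v\<^sub>0 ** a_t \<tau>\<^sub>0)) \<rho>"
      by (intro exI[of _ "\<tau> v"]) (simp add: dist_real_def abs_minus_commute)
  qed
qed

section \<open>Arcs of geodesics in the boundary\<close>

definition contains_arc :: "complex set \<Rightarrow> complex set \<Rightarrow> bool" where
  "contains_arc U L \<longleftrightarrow> geodesic_line L \<and> (\<exists>w r. w \<in> L \<and> r > 0 \<and> L \<inter> ball w r \<subseteq> U)"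

lemma contains_arc_point_off:
  assumes "contains_arc U L" "geodesic_line L'" "L \<noteq> L'"
  obtains z \<rho> where "z \<in> L" "z \<notin> L'" "\<rho> > 0" "L \<inter> ball z \<rho> \<subseteq> U"
proof -
  obtain w r where arc: "geodesic_line L" "w \<in> L" "r > 0" "L \<inter> ball w r \<subseteq> U"
    using assms(1) by (auto simp: contains_arc_def)
  obtain z where z: "z \<in> L \<inter> ball w r" "z \<notin> L'"
    using geodesic_line_point_near_off[OF arc(1) assms(2,3) arc(2,3)] .
  obtain \<rho> where "\<rho> > 0" "ball z \<rho> \<subseteq> ball w r"
    using z(1) by (meson IntD2 openE open_ball)
  with arc z that show ?thesis by blast
qed

lemma pmap_iwasawa_up_to_sign:
  assumes "iwasawa x t \<theta> = g \<or> iwasawa x t \<theta> = - g"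
  shows "pmap (iwasawa x t \<theta> ** a) = pmap (g ** a)"
  using assms by (auto simp: pmap_def matrix_mult_uminus_left mob_uminus)

lemma haar_geod_set_pos_of_arcs:
  assumes I: "contains_arc I L1" and J: "contains_arc J L2" and "L1 \<noteq> L2"
  shows "haar_G (geod_set I J) > 0"
proof -
  have L: "geodesic_line L1" "geodesic_line L2"
    using I J by (simp_all add: contains_arc_def)
  obtain z1 \<rho>1 where z1: "z1 \<in> L1" "z1 \<notin> L2" "\<rho>1 > 0" "L1 \<inter> ball z1 \<rho>1 \<subseteq> I"
    using contains_arc_point_off[OF I L(2) \<open>L1 \<noteq> L2\<close>] .
  obtain z2 \<rho>2 where z2: "z2 \<in> L2" "z2 \<notin> L1" "\<rho>2 > 0" "L2 \<inter> ball z2 \<rho>2 \<subseteq> J"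
    using contains_arc_point_off[OF J L(1)] \<open>L1 \<noteq> L2\<close> by metis
  have "Im z1 > 0" "Im z2 > 0" "z1 \<noteq> z2"
    using z1 z2 L geodesic_line_subset_hplane by (auto simp: hplane_def)
  then obtain g l1 l2 where g: "det g = 1" "l1 > 0" "l2 > 0"
    "pmap (g ** a_t (- l1)) = z1" "pmap (g ** a_t l2) = z2"
    by (rule geodesic_flow_through)
  obtain x\<^sub>0 t\<^sub>0 \<theta>\<^sub>0 where \<theta>\<^sub>0: "0 \<le> \<theta>\<^sub>0" "\<theta>\<^sub>0 < pi" "iwasawa x\<^sub>0 t\<^sub>0 \<theta>\<^sub>0 = g \<or> iwasawa x\<^sub>0 t\<^sub>0 \<theta>\<^sub>0 = - g"
    using iwasawa_surj_up_to_sign[OF g(1)] .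
  define M where "M = (\<lambda>v :: real \<times> real \<times> real. iwasawa (fst v) (fst (snd v)) (snd (snd v)))"
  define v\<^sub>0 where "v\<^sub>0 = (x\<^sub>0, t\<^sub>0, \<theta>\<^sub>0)"
  have M: "\<And>i j. continuous (at v\<^sub>0) (\<lambda>v. M v $ i $ j)" "\<And>v. det (M v) = 1"
    by (simp_all add: M_def continuous_iwasawa_nth det_iwasawa)
  have flow0: "pmap (M v\<^sub>0 ** a_t s) = pmap (g ** a_t s)" for s
    using pmap_iwasawa_up_to_sign[OF \<theta>\<^sub>0(3)] by (simp add: M_def v\<^sub>0_def)
  have "\<forall>\<^sub>F v in nhds v\<^sub>0. \<exists>\<tau>. \<bar>\<tau> - - l1\<bar> < l1 \<and> pmap (M v ** a_t \<tau>) \<in> L1 \<inter> ball z1 \<rho>1"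
    using eventually_crossing_near[OF M L(1), of "- l1" l2 l1 \<rho>1] flow0 g z1 z2 by simp
  moreover have "\<forall>\<^sub>F v in nhds v\<^sub>0. \<exists>\<tau>. \<bar>\<tau> - l2\<bar> < l2 \<and> pmap (M v ** a_t \<tau>) \<in> L2 \<inter> ball z2 \<rho>2"
    using eventually_crossing_near[OF M L(2), of l2 "- l1" l2 \<rho>2] flow0 g z1 z2 by simp
  ultimately have "\<forall>\<^sub>F v in nhds v\<^sub>0. M v \<in> geod_set I J"
  proof eventually_elim
    case (elim v)
    then obtain \<tau>1 \<tau>2 where "\<bar>\<tau>1 - - l1\<bar> < l1" "pmap (M v ** a_t \<tau>1) \<in> I"
      "\<bar>\<tau>2 - l2\<bar> < l2" "pmap (M v ** a_t \<tau>2) \<in> J"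
      using z1(4) z2(4) by blast
    then show ?case
      using M(2) unfolding geod_set_def SL2_def
      by (intro CollectI conjI exI[of _ "- \<tau>1"] exI[of _ \<tau>2]) (auto simp: abs_less_iff)
  qed
  then obtain \<epsilon> where "\<epsilon> > 0" "\<And>v. dist v v\<^sub>0 < \<epsilon> \<Longrightarrow> M v \<in> geod_set I J"
    unfolding eventually_nhds_metric by blast
  then show ?thesis
    using \<theta>\<^sub>0 by (intro haar_G_pos_of_ball) (auto simp: M_def v\<^sub>0_def)
qed

lemma contains_arc_mono: "contains_arc U L \<Longrightarrow> U \<subseteq> V \<Longrightarrow> contains_arc V L"
  unfolding contains_arc_def by blast

lemma contains_arc_nonempty:
  assumes "contains_arc U L"
  obtains w where "w \<in> L" "w \<in> U"
  using assms unfolding contains_arc_def by force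

lemma connected_real_contains_ball_near:
  fixes T :: "real set"
  assumes "connected T" "s\<^sub>0 \<in> T" "s\<^sub>1 \<in> T" "s\<^sub>0 \<noteq> s\<^sub>1" "\<eta> > 0"
  obtains c \<rho> where "\<rho> > 0" "ball c \<rho> \<subseteq> T \<inter> ball s\<^sub>0 \<eta>"
proof -
  define m where "m = min \<eta> \<bar>s\<^sub>1 - s\<^sub>0\<bar> / 2"
  have m: "m > 0" "2 * m \<le> \<eta>" "2 * m \<le> \<bar>s\<^sub>1 - s\<^sub>0\<bar>" using assms by (auto simp: m_def)
  show ?thesis
  proof (cases "s\<^sub>0 < s\<^sub>1")
    case True
    then have "ball (s\<^sub>0 + m) m \<subseteq> {s\<^sub>0..s\<^sub>1} \<inter> ball s\<^sub>0 \<eta>"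
      using m by (auto simp: dist_real_def)
    then show ?thesis
      using connected_contains_Icc[OF assms(1-3)] m that[of m "s\<^sub>0 + m"] by blast
  next
    case False
    then have "ball (s\<^sub>0 - m) m \<subseteq> {s\<^sub>1..s\<^sub>0} \<inter> ball s\<^sub>0 \<eta>"
      using m assms(4) by (auto simp: dist_real_def)
    then show ?thesis
      using connected_contains_Icc[OF assms(1,3,2)] m that[of m "s\<^sub>0 - m"] by blast
  qed
qed

lemma connected_subset_geodesic_line_contains_arc:
  assumes L: "geodesic_line L" "S \<subseteq> L" "connected S"
    and z: "z \<in> S" "z' \<in> S" "z \<noteq> z'" and V: "open V" "z \<in> V"
  shows "contains_arc (S \<inter> V) L"
proof -
  obtain h :: "real \<Rightarrow> complex" and \<phi> where h: "homeomorphism UNIV L h \<phi>"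
    using geodesic_line_homeomorphic_real[OF L(1)] by (auto simp: homeomorphic_def)
  have h\<phi>: "h (\<phi> y) = y" if "y \<in> L" for y using homeomorphism_apply2[OF h that] .
  have hL: "h s \<in> L" for s using homeomorphism_image1[OF h] by auto
  have conn: "connected (\<phi> ` S)"
    using connected_continuous_image[OF continuous_on_subset[OF homeomorphism_cont2[OF h] L(2)] L(3)] .
  have mem: "\<phi> z \<in> \<phi> ` S" "\<phi> z' \<in> \<phi> ` S" using z by auto
  have ne: "\<phi> z \<noteq> \<phi> z'"
  proof
    assume "\<phi> z = \<phi> z'"
    then have "h (\<phi> z) = h (\<phi> z')" by simp
    moreover have "z \<in> L" "z' \<in> L" using z L(2) by auto
    ultimately show False using h\<phi> z(3) by metis
  qed
  have "\<forall>\<^sub>F s in nhds (\<phi> z). h s \<in> V"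
    using homeomorphism_cont1[OF h] V h\<phi> z(1) L(2)
    by (intro eventually_nhds_continuous_in_open) (auto simp: continuous_on_eq_continuous_at)
  then obtain \<eta> where \<eta>: "\<eta> > 0" "\<And>s. dist s (\<phi> z) < \<eta> \<Longrightarrow> h s \<in> V"
    unfolding eventually_nhds_metric by blast
  obtain c \<rho> where c: "\<rho> > 0" "ball c \<rho> \<subseteq> \<phi> ` S \<inter> ball (\<phi> z) \<eta>"
    using connected_real_contains_ball_near[OF conn mem ne \<eta>(1)] .
  have h_ball: "h ` ball c \<rho> \<subseteq> S \<inter> V"
  proof
    fix x assume "x \<in> h ` ball c \<rho>"
    then obtain s where s: "s \<in> ball c \<rho>" "x = h s" by blast
    then have "s \<in> \<phi> ` S" "dist (\<phi> z) s < \<eta>" using c(2) by auto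
    moreover obtain y where "y \<in> S" "s = \<phi> y" using \<open>s \<in> \<phi> ` S\<close> by blast
    ultimately show "x \<in> S \<inter> V" using s h\<phi> L(2) \<eta>(2)[of s] by (auto simp: dist_commute)
  qed
  have "openin (top_of_set L) (h ` ball c \<rho>)"
    by (rule homeomorphism_imp_open_map[OF h]) auto
  moreover have "h c \<in> h ` ball c \<rho>" using c(1) by simp
  ultimately obtain r where "r > 0" "ball (h c) r \<inter> L \<subseteq> h ` ball c \<rho>"
    unfolding openin_contains_ball by blast
  then show ?thesis
    unfolding contains_arc_def using L(1) hL[of c] h_ball by blast
qed

lemma union_geodesic_sides_contains_arc:
  assumes "\<forall>S\<in>Ss. geodesic_side S" "openin (top_of_set (\<Union>Ss)) U" "U \<noteq> {}"
  obtains L where "contains_arc U L"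
proof -
  obtain V where V: "open V" "U = \<Union>Ss \<inter> V" using assms(2) by (auto simp: openin_open)
  obtain z where "z \<in> U" using assms(3) by blast
  with V obtain S where S: "S \<in> Ss" "z \<in> S" "z \<in> V" by blast
  then obtain L z' where "geodesic_line L" "S \<subseteq> L" "connected S" "z' \<in> S" "z' \<noteq> z"
    using assms(1) unfolding geodesic_side_def by metis
  then have "contains_arc (S \<inter> V) L"
    using S V connected_subset_geodesic_line_contains_arc[of L S z z' V] by auto
  then show ?thesis using S V by (intro that) (erule contains_arc_mono, blast)
qed

lemma union_geodesic_sides_subset_geodesic_line:
  assumes Ss: "\<forall>S\<in>Ss. geodesic_side S" "openin (top_of_set (\<Union>Ss)) U"
    and L: "geodesic_line L" "\<And>L'. contains_arc U L' \<Longrightarrow> L' = L"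
  shows "U \<subseteq> L"
proof
  fix z assume z: "z \<in> U"
  show "z \<in> L"
  proof (rule ccontr)
    assume "z \<notin> L"
    obtain K where K: "closed K" "L = hplane \<inter> K"
      using closedin_geodesic_line[OF L(1)] by (auto simp: closedin_closed)
    have "U \<subseteq> hplane"
      using Ss geodesic_line_subset_hplane unfolding geodesic_side_def openin_open by blast
    with z K \<open>z \<notin> L\<close> have "U \<inter> - K \<noteq> {}" by blast
    moreover have "openin (top_of_set (\<Union>Ss)) (U \<inter> - K)"
      using Ss(2) K(1) by (intro openin_Int_open) auto
    ultimately obtain L' where L': "contains_arc (U \<inter> - K) L'"
      using union_geodesic_sides_contains_arc[OF Ss(1)] by blast
    then obtain w where "w \<in> L'" "w \<in> U \<inter> - K" by (rule contains_arc_nonempty)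
    then have "L' \<noteq> L" using K(2) by blast
    moreover have "L' = L" using L(2) L' contains_arc_mono by blast
    ultimately show False by blast
  qed
qed

section \<open>Hyperbolic midpoints\<close>

text \<open>The hyperbolic midpoint \<open>m = x + i y\<close> of \<open>p\<close> and \<open>w\<close> is the centre of the half-turn
  \<open>z \<mapsto> x - y\<^sup>2 / (z - x)\<close> exchanging them, i.e. \<open>(p - x) (w - x) = - y\<^sup>2\<close>; the imaginary part
  of this equation determines \<open>x\<close>, its real part \<open>y\<^sup>2\<close>.\<close>
definition hmid_re :: "complex \<Rightarrow> complex \<Rightarrow> real" where
  "hmid_re p w = (Im p * Re w + Im w * Re p) / (Im p + Im w)"

definition hmid_im_sq :: "complex \<Rightarrow> complex \<Rightarrow> real" where
  "hmid_im_sq p w = Im p * Im w - (Re p - hmid_re p w) * (Re w - hmid_re p w)"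

definition hmid :: "complex \<Rightarrow> complex \<Rightarrow> complex" where
  "hmid p w = Complex (hmid_re p w) (sqrt (hmid_im_sq p w))"

definition half_turn :: "complex \<Rightarrow> complex \<Rightarrow> complex" where
  "half_turn m z = complex_of_real (Re m) - complex_of_real ((Im m)\<^sup>2) / (z - complex_of_real (Re m))"

lemma hmid_im_sq_pos:
  assumes "Im p > 0" "Im w > 0"
  shows "hmid_im_sq p w > 0"
proof -
  define P where "P = Im p + Im w"
  have P: "P > 0" using assms by (simp add: P_def)
  have "(Re p - hmid_re p w) * (Re w - hmid_re p w) = - (Im p * Im w) * ((Re p - Re w) / P)\<^sup>2"
    using P unfolding hmid_re_def P_def[symmetric]
    by (simp add: field_simps power2_eq_square) (simp add: P_def algebra_simps)
  then have "hmid_im_sq p w = Im p * Im w * (1 + ((Re p - Re w) / P)\<^sup>2)"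
    by (simp add: hmid_im_sq_def algebra_simps)
  then show ?thesis using assms by (simp add: add_pos_nonneg)
qed

lemma Im_hmid_pos: "Im p > 0 \<Longrightarrow> Im w > 0 \<Longrightarrow> Im (hmid p w) > 0"
  using hmid_im_sq_pos by (simp add: hmid_def)

lemma half_turn_hmid:
  assumes "Im p > 0" "Im w > 0"
  shows "half_turn (hmid p w) w = p"
proof -
  define x where "x = hmid_re p w"
  define y2 where "y2 = hmid_im_sq p w"
  have y2: "y2 > 0" using hmid_im_sq_pos[OF assms] by (simp add: y2_def)
  have ms: "Re (hmid p w) = x" "(Im (hmid p w))\<^sup>2 = y2" using y2 by (simp_all add: hmid_def x_def y2_def)
  have nz: "w - complex_of_real x \<noteq> 0"
  proof
    assume "w - complex_of_real x = 0"
    then have "Im (w - complex_of_real x) = 0" by simp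
    then show False using assms by simp
  qed
  have P: "Im p + Im w > 0" using assms by simp
  have key: "(p - complex_of_real x) * (w - complex_of_real x) = - complex_of_real y2"
  proof (rule complex_eqI)
    show "Re ((p - complex_of_real x) * (w - complex_of_real x)) = Re (- complex_of_real y2)"
      by (simp add: y2_def hmid_im_sq_def x_def algebra_simps)
    have "x * (Im p + Im w) = Im p * Re w + Im w * Re p" using P by (simp add: x_def hmid_re_def)
    then show "Im ((p - complex_of_real x) * (w - complex_of_real x)) = Im (- complex_of_real y2)"
      by (simp add: algebra_simps)
  qed
  have "half_turn (hmid p w) w = complex_of_real x - complex_of_real y2 / (w - complex_of_real x)"
    by (simp add: half_turn_def ms)
  also have "\<dots> = complex_of_real x + (p - complex_of_real x)"
    using key nz by (simp add: field_simps)
  finally show ?thesis by simp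
qed

lemma cline_hmid:
  assumes "Im p > 0" "Im w > 0" "cline A B C p = 0" "cline A B C w = 0"
  shows "cline A B C (hmid p w) = 0"
proof -
  define x where "x = hmid_re p w"
  define y2 where "y2 = hmid_im_sq p w"
  define P where "P = Im p + Im w"
  have P: "P > 0" using assms by (simp add: P_def)
  have y2: "y2 > 0" using hmid_im_sq_pos[OF assms(1,2)] by (simp add: y2_def)
  have c: "(cmod (hmid p w))\<^sup>2 = x\<^sup>2 + y2" "Re (hmid p w) = x" using y2
    by (simp_all add: hmid_def x_def y2_def cmod_power2)
  have Px: "P * x = Im p * Re w + Im w * Re p" using P by (simp add: x_def hmid_re_def P_def)
  have "P * (x\<^sup>2 + y2) = P * (Im p * Im w - Re p * Re w) + (P * x) * (Re p + Re w)"
    by (simp add: y2_def hmid_im_sq_def x_def[symmetric] algebra_simps power2_eq_square)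
  also have "\<dots> = Im p * ((Re w)\<^sup>2 + (Im w)\<^sup>2) + Im w * ((Re p)\<^sup>2 + (Im p)\<^sup>2)"
    unfolding Px by (simp add: P_def algebra_simps power2_eq_square)
  finally have e: "P * (x\<^sup>2 + y2) = Im p * (cmod w)\<^sup>2 + Im w * (cmod p)\<^sup>2"
    by (simp add: cmod_power2)
  have "P * cline A B C (hmid p w) = A * (P * (x\<^sup>2 + y2)) + B * (P * x) + C * P"
    unfolding cline_def c by (simp add: algebra_simps)
  also have "\<dots> = Im p * cline A B C w + Im w * cline A B C p"
    unfolding e Px by (simp add: cline_def P_def algebra_simps)
  also have "\<dots> = 0" using assms by simp
  finally show ?thesis using P by simp
qed

lemma isCont_half_turn:
  assumes "Im z > 0"
  shows "isCont (half_turn m) z"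
proof -
  have nz: "z - complex_of_real (Re m) \<noteq> 0"
  proof
    assume "z - complex_of_real (Re m) = 0"
    then have "Im (z - complex_of_real (Re m)) = 0" by simp
    then show False using assms by simp
  qed
  show ?thesis unfolding half_turn_def[abs_def] using nz by (intro continuous_intros) auto
qed

lemma hdist_affine:
  assumes "y > 0"
  shows "hdist (complex_of_real x + complex_of_real y * z) (complex_of_real x + complex_of_real y * w) = hdist z w"
proof -
  have "cmod (complex_of_real x + complex_of_real y * z - (complex_of_real x + complex_of_real y * w)) = y * cmod (z - w)"
    using assms by (simp add: norm_mult flip: right_diff_distrib)
  moreover have "y\<^sup>2 * c / (2 * (y * a) * (y * b)) = c / (2 * a * b)" for a b c :: real
  proof -
    have "2 * (y*a) * (y*b) = y\<^sup>2 * (2*a*b)" by (simp add: power2_eq_square algebra_simps)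
    moreover have "y\<^sup>2 \<noteq> 0" using assms by simp
    ultimately show ?thesis by (metis nonzero_mult_divide_mult_cancel_left)
  qed
  ultimately show ?thesis using assms by (simp add: hdist_def power_mult_distrib)
qed

lemma arcosh_double:
  fixes C :: real
  assumes "C \<ge> 1"
  shows "arcosh (2 * C\<^sup>2 - 1) = 2 * arcosh C"
proof -
  define u where "u = arcosh C"
  have u: "u \<ge> 0" "cosh u = C" using arcosh_nonneg_real[OF assms] cosh_arcosh_real[OF assms] by (simp_all add: u_def)
  have "cosh (2*u) = 2 * C\<^sup>2 - 1"
    using u cosh_square_eq[of u] by (simp add: cosh_double)
  then have "arcosh (2 * C\<^sup>2 - 1) = arcosh (cosh (2*u))" by simp
  also have "\<dots> = 2*u" using u by (simp add: arcosh_cosh_real)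
  finally show ?thesis by (simp add: u_def)
qed

lemma hdist_inverse_eq:
  assumes "Im b > 0"
  shows "hdist b \<i> = hdist \<i> (- 1 / b)"
proof -
  define S where "S = mat2 0 (-1) 1 0"
  have "det S = 1" by (simp add: S_def det_2)
  moreover have "mob S b = - 1 / b" "mob S \<i> = \<i>" by (simp_all add: S_def mob_def)
  ultimately show ?thesis
    using hdist_mob[of S b \<i>] assms by (simp add: hdist_commute)
qed

lemma hdist_inverse_double:
  assumes "Im b > 0"
  shows "hdist b (- 1 / b) = 2 * hdist b \<i>"
proof -
  define X where "X = Re b"
  define Y where "Y = Im b"
  define N where "N = X\<^sup>2 + Y\<^sup>2"
  define C where "C = 1 + (X\<^sup>2 + (Y - 1)\<^sup>2) / (2 * Y)"
  have Y: "Y > 0" using assms by (simp add: Y_def)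
  have N: "N > 0" using Y by (simp add: N_def add_nonneg_pos)
  have inv: "- 1 / b = Complex (- X / N) (Y / N)"
    by (simp add: complex_eq_iff X_def Y_def N_def Re_divide Im_divide power2_eq_square)
  have "(cmod (b - (- 1 / b)))\<^sup>2 / (2 * Im b * Im (- 1 / b)) = ((X + X/N)\<^sup>2 + (Y - Y/N)\<^sup>2) / (2 * Y * (Y / N))"
    unfolding inv by (simp add: cmod_power2 X_def Y_def)
  also have "\<dots> = (X\<^sup>2 * (N + 1)\<^sup>2 + Y\<^sup>2 * (N - 1)\<^sup>2) / (2 * N * Y\<^sup>2)"
    using N Y by (simp add: field_simps power2_eq_square)
  finally have "1 + (cmod (b - (- 1 / b)))\<^sup>2 / (2 * Im b * Im (- 1 / b)) =
      1 + (X\<^sup>2 * (N + 1)\<^sup>2 + Y\<^sup>2 * (N - 1)\<^sup>2) / (2 * N * Y\<^sup>2)" by simp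
  also have "\<dots> = (N + 1)\<^sup>2 / (2 * Y\<^sup>2) - 1"
  proof -
    have "2 * N * Y\<^sup>2 + (X\<^sup>2 * (N + 1)\<^sup>2 + Y\<^sup>2 * (N - 1)\<^sup>2) = N * (N + 1)\<^sup>2 - 2 * N * Y\<^sup>2"
      by (simp add: N_def power2_eq_square algebra_simps)
    then show ?thesis using N Y by (simp add: field_simps power2_eq_square)
  qed
  also have "\<dots> = 2 * C\<^sup>2 - 1"
  proof -
    have "C = (N + 1) / (2 * Y)" using Y by (simp add: C_def N_def field_simps power2_eq_square)
    then have "2 * C\<^sup>2 = (N + 1)\<^sup>2 / (2 * Y\<^sup>2)" by (simp add: power_divide power_mult_distrib)
    then show ?thesis by simp
  qed
  finally have "hdist b (- 1 / b) = arcosh (2 * C\<^sup>2 - 1)" unfolding hdist_def by (rule arg_cong)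
  also have "\<dots> = 2 * arcosh C" using Y by (intro arcosh_double) (simp add: C_def)
  also have "arcosh C = hdist b \<i>" by (simp add: hdist_def C_def X_def Y_def cmod_power2)
  finally show ?thesis .
qed

lemma hdist_half_turn:
  assumes m: "Im m > 0" and z: "Im z > 0"
  shows "hdist z m = hdist m (half_turn m z)" "hdist z (half_turn m z) = 2 * hdist z m"
proof -
  define x where "x = Re m"
  define y where "y = Im m"
  have y: "y > 0" using m by (simp add: y_def)
  define b where "b = (z - complex_of_real x) / complex_of_real y"
  have yc: "complex_of_real y \<noteq> 0" using y by simp
  have bz: "z = complex_of_real x + complex_of_real y * b" using yc by (simp add: b_def)
  have bm: "m = complex_of_real x + complex_of_real y * \<i>" by (simp add: x_def y_def complex_eq_iff)
  have b: "Im b > 0" using z y by (simp add: b_def Im_divide_of_real)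
  have bnz: "b \<noteq> 0" using b by auto
  have br: "half_turn m z = complex_of_real x + complex_of_real y * (- 1 / b)"
  proof -
    have "half_turn m z = complex_of_real x - complex_of_real (y\<^sup>2) / (complex_of_real y * b)"
      unfolding half_turn_def using bz by (simp add: x_def y_def)
    then show ?thesis using yc bnz by (simp add: field_simps power2_eq_square)
  qed
  have "hdist z m = hdist b \<i>" unfolding bz bm by (rule hdist_affine[OF y])
  moreover have "hdist m (half_turn m z) = hdist \<i> (- 1 / b)" unfolding br unfolding bm by (rule hdist_affine[OF y])
  moreover have "hdist z (half_turn m z) = hdist b (- 1 / b)" unfolding br unfolding bz by (rule hdist_affine[OF y])
  ultimately show "hdist z m = hdist m (half_turn m z)" "hdist z (half_turn m z) = 2 * hdist z m"
    using hdist_inverse_eq[OF b] hdist_inverse_double[OF b] by simp_all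
qed

lemma cmod_less_of_hdist_less:
  assumes a: "Im a > 0" and e: "\<epsilon> > 0"
  obtains \<delta> where "\<delta> > 0" "\<And>z. Im z > 0 \<Longrightarrow> hdist z a < \<delta> \<Longrightarrow> cmod (z - a) < \<epsilon>"
proof
  define k where "k = \<epsilon>\<^sup>2 / (2 * (Im a + \<epsilon>) * Im a)"
  have k: "k > 0" using a e by (simp add: k_def)
  then show "arcosh (1 + k) > 0" by simp
  fix z assume z: "Im z > 0" "hdist z a < arcosh (1 + k)"
  show "cmod (z - a) < \<epsilon>"
  proof (rule ccontr)
    define D where "D = cmod (z - a)"
    assume "\<not> cmod (z - a) < \<epsilon>"
    then have D: "\<epsilon> \<le> D" by (simp add: D_def)
    have "Im z \<le> Im a + D" using abs_Im_le_cmod[of "z - a"] by (simp add: D_def)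
    \<comment> \<open>\<open>D\<^sup>2 / (Im a + D)\<close> increases with \<open>D\<close>\<close>
    have "\<epsilon>\<^sup>2 * (Im a + D) \<le> D\<^sup>2 * (Im a + \<epsilon>)"
    proof -
      have "\<epsilon>\<^sup>2 * Im a \<le> D\<^sup>2 * Im a" using D e a by (intro mult_right_mono power_mono) auto
      moreover have "\<epsilon> * (\<epsilon> * D) \<le> \<epsilon> * (D * D)" using D e by (intro mult_left_mono mult_right_mono) auto
      ultimately show ?thesis by (simp add: algebra_simps power2_eq_square)
    qed
    then have "k \<le> D\<^sup>2 / (2 * (Im a + D) * Im a)"
      using a e D by (simp add: k_def divide_simps) (simp add: algebra_simps)
    also have "\<dots> \<le> D\<^sup>2 / (2 * Im z * Im a)"
      using z(1) a \<open>Im z \<le> Im a + D\<close> by (intro divide_left_mono mult_right_mono) auto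
    finally have "\<not> hdist z a < arcosh (1 + k)"
      using k z(1) a by (simp add: hdist_def D_def)
    with z(2) show False by simp
  qed
qed

text \<open>The half-turn about \<open>hmid p w\<close> maps points of \<open>F\<close> near \<open>w\<close> to points of \<open>F\<close> near \<open>p\<close>;
  the midpoint lies between such a pair, hence in \<open>F\<close> by convexity.\<close>
lemma hmid_in_open_hconvex:
  assumes F: "open F" "F \<subseteq> hplane" "hconvex F" and p: "p \<in> F" and w: "w \<in> closure F" "Im w > 0"
  shows "hmid p w \<in> F"
proof -
  have pI: "Im p > 0" using p F(2) by (auto simp: hplane_def)
  define m where "m = hmid p w"
  have mI: "Im m > 0" using Im_hmid_pos[OF pI w(2)] by (simp add: m_def)
  have rw: "half_turn m w = p" using half_turn_hmid[OF pI w(2)] by (simp add: m_def)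
  obtain \<epsilon> where e: "\<epsilon> > 0" "ball p \<epsilon> \<subseteq> F" using F(1) p by (auto simp: open_contains_ball)
  have "isCont (half_turn m) w" by (rule isCont_half_turn[OF w(2)])
  then obtain d where d: "d > 0" "\<And>z. dist z w < d \<Longrightarrow> dist (half_turn m z) (half_turn m w) < \<epsilon>"
    using e(1) unfolding continuous_at_eps_delta by blast
  obtain b where b: "b \<in> F" "dist b w < d" using w(1) d(1) by (metis closure_approachable)
  have bI: "Im b > 0" using b F(2) by (auto simp: hplane_def)
  have q: "half_turn m b \<in> F" using d(2)[OF b(2)] rw e(2) by (auto simp: dist_commute)
  have "m \<in> hseg b (half_turn m b)"
    using hdist_half_turn[OF mI bI] mI by (simp add: hseg_def hplane_def hdist_commute)
  then have "m \<in> F" using F(3) b(1) q unfolding hconvex_def by blast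
  then show ?thesis by (simp add: m_def)
qed

lemma hdist_hmid:
  assumes "Im p > 0" "Im w > 0"
  shows "hdist (hmid p w) w = hdist p w / 2"
  using hdist_half_turn[OF Im_hmid_pos[OF assms] assms(2)] half_turn_hmid[OF assms]
  by (simp add: hdist_commute)

lemma hmid_in_geodesic_line:
  assumes "geodesic_line L" "p \<in> L" "w \<in> L"
  shows "hmid p w \<in> L"
proof -
  obtain A B C where L_eq: "L = {z. Im z > 0 \<and> cline A B C z = 0}"
    using geodesic_line_cline[OF assms(1)] .
  have "Im p > 0" "cline A B C p = 0" "Im w > 0" "cline A B C w = 0"
    using assms(2,3) by (simp_all add: L_eq)
  then show ?thesis using cline_hmid Im_hmid_pos by (simp add: L_eq)
qed

text \<open>Iterated midpoints towards \<open>a\<close> stay on \<open>L\<close> and in \<open>F\<close> while their hyperbolic distance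
  to \<open>a\<close> halves at each step, so they eventually enter \<open>ball a r\<close>.\<close>
lemma open_hconvex_disjoint_geodesic_line:
  assumes F: "open F" "F \<subseteq> hplane" "hconvex F"
    and L: "geodesic_line L" "a \<in> L" "a \<in> closure F" "r > 0" "L \<inter> ball a r \<inter> F = {}"
  shows "L \<inter> F = {}"
proof (rule ccontr)
  assume "L \<inter> F \<noteq> {}"
  then obtain p where p: "p \<in> L" "p \<in> F" by blast
  have a: "Im a > 0" and Im_L: "\<And>z. z \<in> L \<Longrightarrow> Im z > 0"
    using L(2) geodesic_line_subset_hplane[OF L(1)] by (auto simp: hplane_def)
  define q where "q = (\<lambda>n. ((\<lambda>x. hmid x a) ^^ n) p)"
  have P: "q n \<in> F \<and> q n \<in> L \<and> hdist (q n) a = hdist p a / 2^n" for n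
  proof (induction n)
    case 0 then show ?case using p by (simp add: q_def)
  next
    case (Suc n)
    have "q (Suc n) = hmid (q n) a" by (simp add: q_def)
    with Suc show ?case
      using hmid_in_open_hconvex[OF F _ L(3) a] hmid_in_geodesic_line[OF L(1) _ L(2)]
        hdist_hmid[OF Im_L a, of "q n"] by simp
  qed
  obtain \<delta> where \<delta>: "\<delta> > 0" "\<And>z. Im z > 0 \<Longrightarrow> hdist z a < \<delta> \<Longrightarrow> cmod (z - a) < r"
    using cmod_less_of_hdist_less[OF a(1) L(4)] by blast
  obtain n where "hdist p a / \<delta> < 2^n" using real_arch_pow[of 2 "hdist p a / \<delta>"] by auto
  then have "hdist p a < \<delta> * 2^n" using \<delta>(1) by (simp add: divide_less_eq mult.commute)
  then have "hdist (q n) a < \<delta>" using P[of n] by (simp add: divide_less_eq)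
  moreover have "Im (q n) > 0" using P[of n] Im_L by blast
  ultimately have "cmod (q n - a) < r" by (rule \<delta>(2)[rotated])
  then have "q n \<in> ball a r" by (simp add: dist_norm norm_minus_commute)
  then show False using P[of n] L(5) by blast
qed

section \<open>Edges of the polygon\<close>

lemma cline_mob_imag_axis_two_points:
  fixes g :: "real^2^2"
  assumes g: "det g = 1" and u: "u1 > 0" "u2 > 0" "u1 \<noteq> u2" "u > 0"
    and "cline A B C (mob g (\<i> * complex_of_real u1)) = 0" "cline A B C (mob g (\<i> * complex_of_real u2)) = 0"
  shows "cline A B C (mob g (\<i> * complex_of_real u)) = 0"
proof -
  have e1: "cline_coeff2 A B C g * u1\<^sup>2 + cline_coeff0 A B C g = 0"
    and e2: "cline_coeff2 A B C g * u2\<^sup>2 + cline_coeff0 A B C g = 0"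
    using assms cline_mob_imag_axis_eq_0_iff[OF g] by auto
  have "cline_coeff2 A B C g * (u1\<^sup>2 - u2\<^sup>2) =
      (cline_coeff2 A B C g * u1\<^sup>2 + cline_coeff0 A B C g) - (cline_coeff2 A B C g * u2\<^sup>2 + cline_coeff0 A B C g)"
    by (simp add: algebra_simps)
  then have "cline_coeff2 A B C g * (u1\<^sup>2 - u2\<^sup>2) = 0" using e1 e2 by simp
  moreover have "u1\<^sup>2 \<noteq> u2\<^sup>2" using u by (simp add: power2_eq_iff_nonneg)
  ultimately have "cline_coeff2 A B C g = 0" by simp
  with e1 show ?thesis using cline_mob_imag_axis_eq_0_iff[OF g u(4)] by simp
qed

lemma mob_imag_axis_in_hseg:
  fixes g :: "real^2^2"
  assumes g: "det g = 1" and u: "u1 > 0" "u2 > 0" "min u1 u2 \<le> u" "u \<le> max u1 u2"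
  shows "mob g (\<i> * complex_of_real u) \<in> hseg (mob g (\<i> * complex_of_real u1)) (mob g (\<i> * complex_of_real u2))"
proof -
  have u_pos: "u > 0" using u by linarith
  have dist: "hdist (mob g (\<i> * complex_of_real v)) (mob g (\<i> * complex_of_real v')) = \<bar>ln v - ln v'\<bar>"
    if "v > 0" "v' > 0" for v v'
    using that hdist_mob[OF g, of "\<i> * complex_of_real v" "\<i> * complex_of_real v'"] hdist_imag_axis by simp
  have "ln (min u1 u2) \<le> ln u" "ln u \<le> ln (max u1 u2)" using u u_pos by auto
  then have "\<bar>ln u1 - ln u\<bar> + \<bar>ln u - ln u2\<bar> = \<bar>ln u1 - ln u2\<bar>"
    by (cases "u1 \<le> u2") (auto simp: min_def max_def)
  moreover have "mob g (\<i> * complex_of_real u) \<in> hplane"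
    using Im_mob_pos[OF g, of "\<i> * complex_of_real u"] u_pos by (simp add: hplane_def)
  ultimately show ?thesis using u u_pos by (simp add: hseg_def dist)
qed

lemma geodesic_line_hseg_connected:
  assumes L: "geodesic_line L" "a \<in> L" "b \<in> L" "a \<noteq> b"
  obtains C where "connected C" "a \<in> C" "b \<in> C" "C \<subseteq> hseg a b \<inter> L"
proof -
  obtain A B Cc where L_eq: "L = {z. Im z > 0 \<and> cline A B Cc z = 0}"
    using geodesic_line_cline[OF L(1)] .
  have "Im a > 0" "Im b > 0" using L(2,3) by (simp_all add: L_eq)
  then obtain g u1 u2 where g: "det g = 1" "u1 > 0" "u2 > 0" "u1 \<noteq> u2"
     "mob g (\<i> * complex_of_real u1) = a" "mob g (\<i> * complex_of_real u2) = b"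
    using mob_imag_axis_through L(4) by blast
  define C where "C = (\<lambda>u. mob g (\<i> * complex_of_real u)) ` {min u1 u2..max u1 u2}"
  have "continuous_on {min u1 u2..max u1 u2} (\<lambda>u. mob g (\<i> * complex_of_real u))"
    unfolding mob_def using g mob_denom_nonzero[OF g(1)]
    by (intro continuous_intros) (auto simp: min_def split: if_splits)
  then have "connected C" unfolding C_def by (intro connected_continuous_image) auto
  moreover have "a \<in> C" "b \<in> C" using g by (auto simp: C_def)
  moreover have "C \<subseteq> hseg a b \<inter> L"
  proof
    fix z assume "z \<in> C"
    then obtain u where u: "min u1 u2 \<le> u" "u \<le> max u1 u2" "z = mob g (\<i> * complex_of_real u)"
      by (auto simp: C_def)
    then have "u > 0" using g by linarith
    show "z \<in> hseg a b \<inter> L"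
      using mob_imag_axis_in_hseg[OF g(1-3) u(1,2)] cline_mob_imag_axis_two_points[OF g(1-4) \<open>u > 0\<close>]
        Im_mob_pos[OF g(1), of "\<i> * complex_of_real u"] \<open>u > 0\<close> L(2,3) g(5,6) u(3)
      by (simp add: L_eq)
  qed
  ultimately show ?thesis by (rule that)
qed

lemma connected_component_boundary_line_is_edge:
  assumes L: "geodesic_line L" "w \<in> L \<inter> hbd F"
    and z: "z \<in> connected_component_set (L \<inter> hbd F) w" "z \<noteq> w"
  shows "poly_edge F (connected_component_set (L \<inter> hbd F) w)"
  unfolding poly_edge_def
proof (intro conjI allI impI)
  define E where "E = connected_component_set (L \<inter> hbd F) w"
  have E_sub: "E \<subseteq> L \<inter> hbd F" unfolding E_def by (rule connected_component_subset)
  have w: "w \<in> E" using L(2) by (simp add: E_def)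
  have "closedin (top_of_set hplane) (hplane \<inter> frontier F)"
    by (intro closedin_closed_Int) auto
  then have "closedin (top_of_set hplane) (L \<inter> hbd F)"
    using closedin_geodesic_line[OF L(1)] by (auto simp: hbd_def Int_commute intro: closedin_Int)
  then show "geodesic_side E"
    using closedin_trans[OF closedin_connected_component] E_sub L(1) w z
    unfolding geodesic_side_def E_def by blast
  show "E \<subseteq> hbd F" using E_sub by blast
  fix E' assume E': "geodesic_side E' \<and> E \<subseteq> E' \<and> E' \<subseteq> hbd F"
  then obtain L' where L': "geodesic_line L'" "E' \<subseteq> L'" "connected E'"
    unfolding geodesic_side_def by blast
  have wz: "w \<in> E" "z \<in> E" using w z(1) by (simp_all add: E_def)
  have "L' = L"
    using geodesic_line_eqI[OF L'(1) L(1), of w z] wz E' L'(2) E_sub z(2) by blast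
  then have "E' \<subseteq> E"
    unfolding E_def using L' E' w by (intro connected_component_maximal) auto
  with E' show "E' = E" by blast
qed

lemma boundary_line_points_connected:
  assumes F: "open F" "hconvex (closure F \<inter> hplane)"
    and L: "geodesic_line L" "L \<inter> F = {}" "w1 \<in> L \<inter> hbd F" "w2 \<in> L \<inter> hbd F"
  shows "w2 \<in> connected_component_set (L \<inter> hbd F) w1"
proof (cases "w1 = w2")
  case True
  then show ?thesis using L(3) by simp
next
  case False
  obtain C where C: "connected C" "w1 \<in> C" "w2 \<in> C" "C \<subseteq> hseg w1 w2 \<inter> L"
    using geodesic_line_hseg_connected[OF L(1)] L(3,4) False by blast
  have "w1 \<in> closure F \<inter> hplane" "w2 \<in> closure F \<inter> hplane"
    using L(3,4) by (auto simp: hbd_def frontier_def)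
  then have "hseg w1 w2 \<subseteq> closure F \<inter> hplane"
    using F(2) unfolding hconvex_def by blast
  then have "C \<subseteq> L \<inter> hbd F"
    using C(4) L(2) F(1) by (auto simp: hbd_def frontier_def interior_open)
  then show ?thesis
    using C by (intro connected_component_maximal[THEN subsetD]) auto
qed

lemma arcs_on_geodesic_line_in_edge:
  assumes F: "open F" "hconvex F" "hconvex (closure F \<inter> hplane)"
    and I: "contains_arc I L" "I \<subseteq> L \<inter> hbd F" "connected I"
    and J: "J \<subseteq> L \<inter> hbd F" "connected J" "J \<noteq> {}"
  shows "\<exists>E. poly_edge F E \<and> I \<subseteq> E \<and> J \<subseteq> E"
proof -
  obtain w r where arc: "geodesic_line L" "w \<in> L" "r > 0" "L \<inter> ball w r \<subseteq> I"
    using I(1) by (auto simp: contains_arc_def)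
  have hbd: "hbd F \<subseteq> closure F" "hbd F \<inter> F = {}"
    using frontier_disjoint_eq[of F] F(1) by (auto simp: hbd_def frontier_def)
  have w: "w \<in> I" using arc by auto
  have "L \<inter> F = {}"
    using open_hconvex_disjoint_geodesic_line[OF F(1) _ F(2) arc(1,2) _ arc(3)] F(2) w I(2) arc(4) hbd
    unfolding hconvex_def by blast
  define E where "E = connected_component_set (L \<inter> hbd F) w"
  have "I \<subseteq> E"
    unfolding E_def using I(2,3) w by (intro connected_component_maximal) auto
  moreover have "J \<subseteq> E"
  proof -
    obtain w2 where "w2 \<in> J" using J(3) by blast
    then have "w2 \<in> E"
      unfolding E_def using boundary_line_points_connected[OF F(1,3) arc(1) \<open>L \<inter> F = {}\<close>] w I(2) J(1) by blast
    then have "E = connected_component_set (L \<inter> hbd F) w2"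
      unfolding E_def by (metis connected_component_eq)
    then show ?thesis using J(1,2) \<open>w2 \<in> J\<close> by (simp add: connected_component_maximal)
  qed
  moreover obtain z where "z \<in> L \<inter> ball w r" "z \<noteq> w"
    using geodesic_line_point_near[OF arc(1-3)] .
  then have "poly_edge F E"
    unfolding E_def using \<open>I \<subseteq> E\<close> arc(4) w I(2)
    by (intro connected_component_boundary_line_is_edge[OF arc(1), of w F z]) (auto simp: E_def)
  ultimately show ?thesis by blast
qed

theorem lemma5p1:
  fixes \<Gamma> :: "(real^2^2) set" and F I J :: "complex set"
  assumes "discrete_subgroup \<Gamma>" and "finite_covolume \<Gamma>"
    and "fundamental_polygon \<Gamma> F"
    and "I \<subseteq> hbd F" and "I \<noteq> {}" and "connected I" and "openin (top_of_set (hbd F)) I"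
    and "J \<subseteq> hbd F" and "J \<noteq> {}" and "connected J" and "openin (top_of_set (hbd F)) J"
    and "\<not> (\<exists>E. poly_edge F E \<and> I \<subseteq> E \<and> J \<subseteq> E)"
  shows "haar_G (geod_set I J) > 0"
proof (rule ccontr)
  assume "\<not> haar_G (geod_set I J) > 0"
  then have same_line: "L1 = L2" if "contains_arc I L1" "contains_arc J L2" for L1 L2
    using haar_geod_set_pos_of_arcs that by blast
  obtain Ss where Ss: "\<forall>S\<in>Ss. geodesic_side S" "\<Union>Ss = hbd F"
    using assms(3) unfolding fundamental_polygon_def by blast
  have F: "open F" "hconvex F" "hconvex (closure F \<inter> hplane)"
    using assms(3) by (simp_all add: fundamental_polygon_def)
  obtain L where I_arc: "contains_arc I L"
    using union_geodesic_sides_contains_arc[OF Ss(1)] Ss(2) assms(5,7) by metis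
  obtain L' where J_arc: "contains_arc J L'"
    using union_geodesic_sides_contains_arc[OF Ss(1)] Ss(2) assms(9,11) by metis
  have L: "geodesic_line L" using I_arc by (simp add: contains_arc_def)
  have "L' = L" using same_line[OF I_arc J_arc] by simp
  have "I \<subseteq> L"
    by (rule union_geodesic_sides_subset_geodesic_line[OF Ss(1) _ L])
      (use Ss(2) assms(7) same_line[OF _ J_arc] \<open>L' = L\<close> in auto)
  moreover have "J \<subseteq> L"
    by (rule union_geodesic_sides_subset_geodesic_line[OF Ss(1) _ L])
      (use Ss(2) assms(11) same_line[OF I_arc] in auto)
  ultimately show False
    using arcs_on_geodesic_line_in_edge[OF F I_arc _ assms(6) _ assms(10,9)] assms(4,8,12) by blast
qed


end
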